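(* Every invertible subalgebra $\mathcal A$ of $\mathrm{Mat}(\mathbb{Z}^D,p)$ is central, simple, and locally generated.
   Context: $\mathrm{Mat}(\mathbb{Z}^D,p)$ is the local operator algebra: for $p:\mathbb{Z}^D\to\mathbb{Z}_{>0}$ and finite $S\subset\mathbb{Z}^D$, $\mathrm{Mat}(S,p)=\bigotimes_{s\in S}M_{p(s)}(\mathbb{C})$ with embeddings by tensoring identities, and $\mathrm{Mat}(\mathbb{Z}^D,p)$ is the union (direct limit), a $*$-algebra. The support $\mathrm{Supp}(x)$ is the smallest finite $S$ with $x\in\mathrm{Mat}(S,p)$; scalars have empty support. $S^{+\ell}$ is the set of sites at $\ell_\infty$-distance at most $\ell$ from $S$. A unital $*$-subalgebra $\mathcal A$ is invertible if there is $\ell>0$ such that every $x\in\mathrm{Mat}(\mathbb{Z}^D,p)$ is a finite sum $x=\sum_ia_ib_i$ with $a_i\in\mathcal A$, $b_i$ in the commutant $\mathcal A'$ of $\mathcal A$ within $\mathrm{Mat}(\mathbb{Z}^D,p)$, and $\mathrm{Supp}(a_i),\mathrm{Supp}(b_i)\subseteq\mathrm{Supp}(x)^{+\ell}$. Central means only scalar multiples of $\mathbf 1$ commute with all elements; simple means no two-sided ideals other than $0$ and the whole algebra. A subalgebra is locally generated if for some $\ell>0$ it has a generating set whose elements all have support of diameter at most $\ell$. *)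

theory Defs
  imports "HOL-Analysis.Analysis" "HOL-Library.Function_Algebras"
begin

text \<open>Operators in Mat(Z^D,p) are modelled
as matrix kernels on the (infinite) configuration space, of the form
k(sigma|S, tau|S) * delta(sigma off S, tau off S) for a finite set S: this is exactly
the image of Mat(S,p) = tensor of M_p(s) under the embedding x |-> x (x) 1.\<close>

type_synonym site = "int list"
type_synonym conf = "site \<Rightarrow> nat"
type_synonym op = "conf \<Rightarrow> conf \<Rightarrow> complex"

definition sites :: "nat \<Rightarrow> site set" where
  "sites D = {s. length s = D}"

definition Conf :: "nat \<Rightarrow> (site \<Rightarrow> nat) \<Rightarrow> conf set" where
  "Conf D p = {\<sigma>. \<forall>s. (s \<in> sites D \<longrightarrow> \<sigma> s < p s) \<and> (s \<notin> sites D \<longrightarrow> \<sigma> s = 0)}"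

text \<open>x belongs to Mat(S,p) (embedded in Mat(Z^D,p)).\<close>
definition is_local :: "nat \<Rightarrow> (site \<Rightarrow> nat) \<Rightarrow> site set \<Rightarrow> op \<Rightarrow> bool" where
  "is_local D p S x \<longleftrightarrow> finite S \<and> S \<subseteq> sites D \<and>
     (\<forall>\<sigma> \<tau>. x \<sigma> \<tau> \<noteq> 0 \<longrightarrow> \<sigma> \<in> Conf D p \<and> \<tau> \<in> Conf D p \<and> (\<forall>s \<in> sites D - S. \<sigma> s = \<tau> s)) \<and>
     (\<forall>\<sigma> \<tau> \<sigma>' \<tau>'. \<sigma> \<in> Conf D p \<longrightarrow> \<tau> \<in> Conf D p \<longrightarrow> \<sigma>' \<in> Conf D p \<longrightarrow> \<tau>' \<in> Conf D p \<longrightarrow>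
        (\<forall>s \<in> S. \<sigma> s = \<sigma>' s \<and> \<tau> s = \<tau>' s) \<longrightarrow>
        (\<forall>s \<in> sites D - S. \<sigma> s = \<tau> s \<and> \<sigma>' s = \<tau>' s) \<longrightarrow> x \<sigma> \<tau> = x \<sigma>' \<tau>')"

definition Mat :: "nat \<Rightarrow> (site \<Rightarrow> nat) \<Rightarrow> op set" where
  "Mat D p = {x. \<exists>S. is_local D p S x}"

definition Supp :: "nat \<Rightarrow> (site \<Rightarrow> nat) \<Rightarrow> op \<Rightarrow> site set" where
  "Supp D p x = \<Inter> {S. is_local D p S x}"

text \<open>Algebra operations (addition is pointwise + on functions).\<close>
definition op_mult :: "op \<Rightarrow> op \<Rightarrow> op" where
  "op_mult x y = (\<lambda>\<sigma> \<tau>. infsum (\<lambda>\<rho>. x \<sigma> \<rho> * y \<rho> \<tau>) UNIV)"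

definition op_adj :: "op \<Rightarrow> op" where
  "op_adj x = (\<lambda>\<sigma> \<tau>. cnj (x \<tau> \<sigma>))"

definition op_scale :: "complex \<Rightarrow> op \<Rightarrow> op" where
  "op_scale c x = (\<lambda>\<sigma> \<tau>. c * x \<sigma> \<tau>)"

definition op_one :: "nat \<Rightarrow> (site \<Rightarrow> nat) \<Rightarrow> op" where
  "op_one D p = (\<lambda>\<sigma> \<tau>. if \<sigma> = \<tau> \<and> \<sigma> \<in> Conf D p then 1 else 0)"

definition linf_dist :: "site \<Rightarrow> site \<Rightarrow> int" where
  "linf_dist s t = Max (insert 0 {\<bar>s ! i - t ! i\<bar> | i. i < min (length s) (length t)})"

definition thicken :: "nat \<Rightarrow> site set \<Rightarrow> nat \<Rightarrow> site set" where
  "thicken D S l = {t \<in> sites D. \<exists>s \<in> S. linf_dist s t \<le> int l}"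

definition diam_le :: "site set \<Rightarrow> nat \<Rightarrow> bool" where
  "diam_le S l \<longleftrightarrow> (\<forall>s \<in> S. \<forall>t \<in> S. linf_dist s t \<le> int l)"

definition unital_star_subalg :: "nat \<Rightarrow> (site \<Rightarrow> nat) \<Rightarrow> op set \<Rightarrow> bool" where
  "unital_star_subalg D p A \<longleftrightarrow> A \<subseteq> Mat D p \<and> op_one D p \<in> A \<and>
     (\<forall>x \<in> A. \<forall>y \<in> A. x + y \<in> A \<and> op_mult x y \<in> A) \<and>
     (\<forall>c. \<forall>x \<in> A. op_scale c x \<in> A) \<and> (\<forall>x \<in> A. op_adj x \<in> A)"

definition commutant :: "nat \<Rightarrow> (site \<Rightarrow> nat) \<Rightarrow> op set \<Rightarrow> op set" where
  "commutant D p A = {y \<in> Mat D p. \<forall>a \<in> A. op_mult a y = op_mult y a}"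

definition invertible_subalg :: "nat \<Rightarrow> (site \<Rightarrow> nat) \<Rightarrow> op set \<Rightarrow> bool" where
  "invertible_subalg D p A \<longleftrightarrow> unital_star_subalg D p A \<and>
     (\<exists>l>0. \<forall>x \<in> Mat D p. \<exists>(n::nat) a b.
        (\<forall>i<n. a i \<in> A \<and> b i \<in> commutant D p A \<and>
               Supp D p (a i) \<subseteq> thicken D (Supp D p x) l \<and>
               Supp D p (b i) \<subseteq> thicken D (Supp D p x) l) \<and>
        x = (\<Sum>i<n. op_mult (a i) (b i)))"

definition central_subalg :: "nat \<Rightarrow> (site \<Rightarrow> nat) \<Rightarrow> op set \<Rightarrow> bool" where
  "central_subalg D p A \<longleftrightarrow>
     (\<forall>x \<in> A. (\<forall>y \<in> A. op_mult x y = op_mult y x) \<longrightarrow> (\<exists>c. x = op_scale c (op_one D p)))"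

definition two_sided_ideal :: "op set \<Rightarrow> op set \<Rightarrow> bool" where
  "two_sided_ideal A I \<longleftrightarrow> I \<subseteq> A \<and> 0 \<in> I \<and>
     (\<forall>x \<in> I. \<forall>y \<in> I. x - y \<in> I) \<and>
     (\<forall>a \<in> A. \<forall>x \<in> I. op_mult a x \<in> I \<and> op_mult x a \<in> I)"

definition simple_subalg :: "op set \<Rightarrow> bool" where
  "simple_subalg A \<longleftrightarrow> (\<forall>I. two_sided_ideal A I \<longrightarrow> I = {0} \<or> I = A)"

definition generated_subalg :: "nat \<Rightarrow> (site \<Rightarrow> nat) \<Rightarrow> op set \<Rightarrow> op set" where
  "generated_subalg D p G = \<Inter> {B. unital_star_subalg D p B \<and> G \<subseteq> B}"

definition locally_generated :: "nat \<Rightarrow> (site \<Rightarrow> nat) \<Rightarrow> op set \<Rightarrow> bool" where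
  "locally_generated D p A \<longleftrightarrow>
     (\<exists>l>0. \<exists>G \<subseteq> A. (\<forall>g \<in> G. diam_le (Supp D p g) l) \<and> A = generated_subalg D p G)"

end

theory Submission
  imports Defs
begin

text \<open>
  Operators are kernels that are local on finite sets of sites, and the single-site matrix
  units generate \<open>Mat(\<int>\<^sup>D, p)\<close>. Invertibility of \<open>A\<close> says that \<open>Mat(\<int>\<^sup>D, p)\<close> is spanned by
  products \<open>a b\<close> with \<open>a \<in> A\<close> and \<open>b \<in> A'\<close>.

  Hence an element of the center of \<open>A\<close> commutes with all of \<open>Mat(\<int>\<^sup>D, p)\<close> and is a scalar.

  If \<open>I\<close> is a nonzero ideal of \<open>A\<close>, sandwiching a nonzero element of \<open>I\<close> between matrix units
  shows that \<open>1\<close> lies in the span of \<open>I A'\<close>, say \<open>1 = \<Sum>\<^sub>k i\<^sub>k b\<^sub>k\<close>. A polynomial without constant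
  term in the positive element \<open>h = \<Sum>\<^sub>k i\<^sub>k i\<^sub>k\<^sup>*\<close> is a left unit \<open>q \<in> I\<close> for all \<open>i\<^sub>k\<close>, so
  \<open>q = \<Sum>\<^sub>k q i\<^sub>k b\<^sub>k = 1\<close>.

  Centrality and simplicity make \<open>A \<otimes> A' \<rightarrow> Mat(\<int>\<^sup>D, p)\<close> injective, so an element of \<open>A\<close> in the
  span of \<open>V A'\<close>, for a subspace \<open>V \<subseteq> A\<close>, lies in \<open>V\<close>. Let \<open>B\<close> be a unital \<open>*\<close>-subalgebra
  containing all elements of \<open>A\<close> of diameter at most \<open>2 l\<close>, where \<open>l\<close> is the range of
  invertibility. Decomposing the single-site matrix units puts them, and hence all of
  \<open>Mat(\<int>\<^sup>D, p)\<close>, into the span of \<open>(A \<inter> B) A'\<close>, so \<open>A \<subseteq> B\<close>.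
\<close>

lemma op_sum_apply: "(\<Sum>k\<in>K. (f k :: op)) \<sigma> \<tau> = (\<Sum>k\<in>K. f k \<sigma> \<tau>)"
  by (induction K rule: infinite_finite_induct) auto

lemma op_mult_zero_left [simp]: "op_mult 0 y = 0"
  and op_mult_zero_right [simp]: "op_mult x 0 = 0"
  by (simp_all add: op_mult_def fun_eq_iff)

lemma op_adj_mult: "op_adj (op_mult x y) = op_mult (op_adj y) (op_adj x)"
  by (simp add: op_adj_def op_mult_def fun_eq_iff mult.commute flip: infsum_cnj)

lemma op_adj_adj [simp]: "op_adj (op_adj x) = x"
  and op_adj_zero [simp]: "op_adj 0 = 0"
  by (simp_all add: op_adj_def fun_eq_iff)

lemma op_adj_sum: "op_adj (\<Sum>k\<in>K. f k) = (\<Sum>k\<in>K. op_adj (f k))"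
  by (induction K rule: infinite_finite_induct) (simp_all add: op_adj_def fun_eq_iff)

lemma op_scale_scale: "op_scale a (op_scale b x) = op_scale (a * b) x"
  and op_scale_one [simp]: "op_scale 1 x = x"
  and op_scale_zero [simp]: "op_scale 0 x = 0"
  and op_scale_sum: "op_scale c (\<Sum>k\<in>K. f k) = (\<Sum>k\<in>K. op_scale c (f k))"
  by (simp_all add: op_scale_def fun_eq_iff op_sum_apply sum_distrib_left)

lemma op_scale_minus_one: "op_scale (-1) x = - x"
  by (simp add: op_scale_def fun_eq_iff)

lemma sum_insert_None_image_Some:
  "finite K \<Longrightarrow> (\<Sum>q\<in>insert None (Some ` K). f q) = f None + (\<Sum>k\<in>K. f (Some k))"
  by (simp add: sum.reindex)

definition op_independent :: "'i set \<Rightarrow> ('i \<Rightarrow> op) \<Rightarrow> bool" where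
  "op_independent K b \<longleftrightarrow> (\<forall>\<nu>. (\<Sum>k\<in>K. op_scale (\<nu> k) (b k)) = 0 \<longrightarrow> (\<forall>k\<in>K. \<nu> k = 0))"

lemma op_independent_subset:
  assumes indep: "op_independent K b" and "K' \<subseteq> K" "finite K"
  shows "op_independent K' b"
  unfolding op_independent_def
proof (intro allI impI)
  fix \<nu> assume rel: "(\<Sum>k\<in>K'. op_scale (\<nu> k) (b k)) = 0"
  let ?\<nu> = "\<lambda>k. if k \<in> K' then \<nu> k else 0"
  have "(\<Sum>k\<in>K. op_scale (?\<nu> k) (b k)) = (\<Sum>k\<in>K'. op_scale (\<nu> k) (b k))"
    using assms(2,3) by (intro sum.mono_neutral_cong_right) auto
  also note rel
  finally have "\<forall>k\<in>K. ?\<nu> k = 0"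
    using indep[unfolded op_independent_def, THEN spec[of _ ?\<nu>]] by blast
  then show "\<forall>k\<in>K'. \<nu> k = 0"
    using assms(2) by (metis subsetD)
qed

lemma linf_dist_set: "{\<bar>s ! i - t ! i\<bar> | i. i < n} = (\<lambda>i. \<bar>s ! i - t ! i\<bar>) ` {..<n}"
  by auto

lemma linf_dist_nonneg: "0 \<le> linf_dist s t"
  unfolding linf_dist_def linf_dist_set by (rule Max_ge) auto

lemma linf_dist_component_le: "i < length s \<Longrightarrow> i < length t \<Longrightarrow> \<bar>s ! i - t ! i\<bar> \<le> linf_dist s t"
  unfolding linf_dist_def linf_dist_set by (rule Max_ge) auto

lemma linf_dist_le:
  assumes "0 \<le> c" "\<And>i. i < length s \<Longrightarrow> i < length t \<Longrightarrow> \<bar>s ! i - t ! i\<bar> \<le> c"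
  shows "linf_dist s t \<le> c"
  unfolding linf_dist_def linf_dist_set using assms by (subst Max_le_iff) auto

lemma linf_dist_commute: "linf_dist s t = linf_dist t s"
proof -
  have "(\<lambda>i. \<bar>s ! i - t ! i\<bar>) ` {..<min (length s) (length t)} =
      (\<lambda>i. \<bar>t ! i - s ! i\<bar>) ` {..<min (length t) (length s)}"
    by (auto simp: abs_minus_commute min.commute)
  then show ?thesis
    unfolding linf_dist_def linf_dist_set by simp
qed

lemma linf_dist_triangle:
  assumes "length s = length t" "length t = length u"
  shows "linf_dist s u \<le> linf_dist s t + linf_dist t u"
proof (rule linf_dist_le)
  show "0 \<le> linf_dist s t + linf_dist t u"
    using linf_dist_nonneg[of s t] linf_dist_nonneg[of t u] by simp
  fix i assume "i < length s" "i < length u"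
  then show "\<bar>s ! i - u ! i\<bar> \<le> linf_dist s t + linf_dist t u"
    using linf_dist_component_le[of i s t] linf_dist_component_le[of i t u] assms by simp
qed

lemma thicken_mono: "S \<subseteq> T \<Longrightarrow> thicken D S l \<subseteq> thicken D T l"
  unfolding thicken_def by blast

lemma diam_le_thicken_singleton:
  assumes "X \<subseteq> thicken D {s} l" "s \<in> sites D"
  shows "diam_le X (2 * l)"
  unfolding diam_le_def
proof (intro ballI)
  fix t1 t2 assume "t1 \<in> X" "t2 \<in> X"
  then have t: "t1 \<in> sites D" "t2 \<in> sites D" "linf_dist s t1 \<le> int l" "linf_dist s t2 \<le> int l"
    using assms(1) unfolding thicken_def by auto
  have "linf_dist t1 t2 \<le> linf_dist t1 s + linf_dist s t2"
    using assms(2) t by (intro linf_dist_triangle) (auto simp: sites_def)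
  then show "linf_dist t1 t2 \<le> int (2 * l)"
    using t linf_dist_commute[of t1 s] by simp
qed

lemma Supp_subset: "is_local D p S x \<Longrightarrow> Supp D p x \<subseteq> S"
  unfolding Supp_def by blast

lemma exists_nontrivial_vanishing_combination:
  fixes f :: "'j \<Rightarrow> 'x \<Rightarrow> 'a::field"
  assumes "finite X" "finite J" "card X < card J"
  shows "\<exists>c. (\<exists>j\<in>J. c j \<noteq> 0) \<and> (\<forall>x\<in>X. (\<Sum>j\<in>J. c j * f j x) = 0)"
  using assms
proof (induction X arbitrary: J f rule: finite_induct)
  case empty
  then obtain j0 where "j0 \<in> J"
    by fastforce
  then show ?case
    by (intro exI[of _ "\<lambda>j. if j = j0 then 1 else 0"]) auto
next
  case (insert x0 X)
  show ?case
  proof (cases "\<forall>j\<in>J. f j x0 = 0")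
    case True
    then show ?thesis
      using insert.IH[OF insert.prems(1), of f] insert.prems(2) insert.hyps by auto
  next
    case False
    then obtain j0 where j0: "j0 \<in> J" "f j0 x0 \<noteq> 0"
      by blast
    define g where "g j x = f j x - (f j x0 / f j0 x0) * f j0 x" for j x
    have "card X < card (J - {j0})"
      using insert.prems insert.hyps j0(1) by simp
    then obtain c where c: "\<exists>j\<in>J - {j0}. c j \<noteq> 0" "\<forall>x\<in>X. (\<Sum>j\<in>J - {j0}. c j * g j x) = 0"
      using insert.IH[of "J - {j0}" g] insert.prems(1) by auto
    define c' where "c' = c(j0 := - (\<Sum>j\<in>J - {j0}. c j * f j x0) / f j0 x0)"
    have eliminate: "(\<Sum>j\<in>J. c' j * f j x) = (\<Sum>j\<in>J - {j0}. c j * g j x)" for x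
    proof -
      have "(\<Sum>j\<in>J - {j0}. c' j * f j x) = (\<Sum>j\<in>J - {j0}. c j * f j x)"
        by (intro sum.cong) (auto simp: c'_def)
      then have lhs: "(\<Sum>j\<in>J. c' j * f j x) = c' j0 * f j0 x + (\<Sum>j\<in>J - {j0}. c j * f j x)"
        using sum.remove[OF insert.prems(1) j0(1), of "\<lambda>j. c' j * f j x"] by simp
      have "c j * g j x = c j * f j x - (c j * f j x0) * (f j0 x / f j0 x0)" for j
        by (simp add: g_def algebra_simps)
      then have "(\<Sum>j\<in>J - {j0}. c j * g j x) =
          (\<Sum>j\<in>J - {j0}. c j * f j x) - (\<Sum>j\<in>J - {j0}. c j * f j x0) * (f j0 x / f j0 x0)"
        by (simp only: sum_subtractf sum_distrib_right)
      with lhs show ?thesis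
        by (simp add: c'_def)
    qed
    have "g j x0 = 0" for j
      using j0(2) by (simp add: g_def)
    then have "\<forall>x\<in>insert x0 X. (\<Sum>j\<in>J. c' j * f j x) = 0"
      using c(2) by (simp add: eliminate)
    moreover have "\<exists>j\<in>J. c' j \<noteq> 0"
      using c(1) by (auto simp: c'_def)
    ultimately show ?thesis
      by blast
  qed
qed

section \<open>Local operators\<close>

locale lattice_system =
  fixes D :: nat and p :: "site \<Rightarrow> nat"
  assumes dims_pos: "\<forall>s \<in> sites D. p s > 0"
begin

abbreviation "Cf \<equiv> Conf D p"
abbreviation "M \<equiv> Mat D p"
abbreviation "one \<equiv> op_one D p"
abbreviation "loc \<equiv> is_local D p"

definition fiber :: "site set \<Rightarrow> conf \<Rightarrow> conf set" where
  "fiber U \<sigma> = {\<rho> \<in> Cf. \<forall>s. s \<notin> U \<longrightarrow> \<rho> s = \<sigma> s}"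

lemma Conf_outside_sites: "\<sigma> \<in> Cf \<Longrightarrow> s \<notin> sites D \<Longrightarrow> \<sigma> s = 0"
  by (simp add: Conf_def)

lemma zero_in_Conf: "(\<lambda>_. 0) \<in> Cf"
  using dims_pos by (auto simp: Conf_def)

lemma override_on_Conf: "\<sigma> \<in> Cf \<Longrightarrow> \<rho> \<in> Cf \<Longrightarrow> override_on \<sigma> \<rho> U \<in> Cf"
  by (auto simp: Conf_def override_on_def)

lemma override_on_fiber: "\<sigma> \<in> Cf \<Longrightarrow> \<alpha> \<in> Cf \<Longrightarrow> override_on \<sigma> \<alpha> U \<in> fiber U \<sigma>"
  using override_on_Conf by (auto simp: fiber_def)

lemma fiber_eq_of_mem: "\<rho> \<in> fiber U \<sigma> \<Longrightarrow> fiber U \<rho> = fiber U \<sigma>"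
  unfolding fiber_def by auto

lemma finite_fiber:
  assumes "finite U"
  shows "finite (fiber U \<sigma>)"
proof (rule inj_on_finite[where f = "\<lambda>\<rho>. restrict \<rho> U"])
  show "inj_on (\<lambda>\<rho>. restrict \<rho> U) (fiber U \<sigma>)"
  proof (rule inj_onI)
    fix \<rho> \<rho>' assume "\<rho> \<in> fiber U \<sigma>" "\<rho>' \<in> fiber U \<sigma>" "restrict \<rho> U = restrict \<rho>' U"
    then show "\<rho> = \<rho>'"
      unfolding fiber_def by (auto simp: fun_eq_iff restrict_def) metis
  qed
  have "\<rho> s \<le> p s" if "\<rho> \<in> Cf" for \<rho> s
    using that by (cases "s \<in> sites D") (auto simp: Conf_def less_imp_le_nat)
  then show "(\<lambda>\<rho>. restrict \<rho> U) ` fiber U \<sigma> \<subseteq> PiE U (\<lambda>s. {..p s})"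
    by (auto simp: fiber_def PiE_iff)
  show "finite (PiE U (\<lambda>s. {..p s}))"
    using assms by (simp add: finite_PiE)
qed

lemma local_finite: "loc U x \<Longrightarrow> finite U"
  and local_subset_sites: "loc U x \<Longrightarrow> U \<subseteq> sites D"
  by (auto simp: is_local_def)

lemma local_nonzeroD:
  assumes "loc U x" "x \<sigma> \<tau> \<noteq> 0"
  shows "\<sigma> \<in> Cf \<and> \<tau> \<in> Cf \<and> (\<forall>s. s \<notin> U \<longrightarrow> \<sigma> s = \<tau> s)"
proof -
  have "\<sigma> \<in> Cf" "\<tau> \<in> Cf" "\<forall>s \<in> sites D - U. \<sigma> s = \<tau> s"
    using assms unfolding is_local_def by blast+
  moreover have "\<sigma> s = \<tau> s" if "s \<notin> U" for s
    using calculation that Conf_outside_sites[of \<sigma> s] Conf_outside_sites[of \<tau> s]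
    by (cases "s \<in> sites D") auto
  ultimately show ?thesis by blast
qed

lemma local_vanishes:
  "loc U x \<Longrightarrow> \<not> (\<sigma> \<in> Cf \<and> \<tau> \<in> Cf \<and> (\<forall>s. s \<notin> U \<longrightarrow> \<sigma> s = \<tau> s)) \<Longrightarrow> x \<sigma> \<tau> = 0"
  using local_nonzeroD by blast

lemma local_kernel_eq:
  assumes "loc U x" "\<sigma> \<in> Cf" "\<tau> \<in> Cf" "\<sigma>' \<in> Cf" "\<tau>' \<in> Cf"
    "\<forall>s\<in>U. \<sigma> s = \<sigma>' s \<and> \<tau> s = \<tau>' s"
    "\<forall>s. s \<notin> U \<longrightarrow> \<sigma> s = \<tau> s" "\<forall>s. s \<notin> U \<longrightarrow> \<sigma>' s = \<tau>' s"
  shows "x \<sigma> \<tau> = x \<sigma>' \<tau>'"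
proof -
  have "\<forall>s \<in> sites D - U. \<sigma> s = \<tau> s \<and> \<sigma>' s = \<tau>' s"
    using assms(7,8) by blast
  then show ?thesis
    using assms(1-6) unfolding is_local_def by blast
qed

lemma localI:
  assumes "finite U" "U \<subseteq> sites D"
    and "\<And>\<sigma> \<tau>. x \<sigma> \<tau> \<noteq> 0 \<Longrightarrow> \<sigma> \<in> Cf \<and> \<tau> \<in> Cf \<and> (\<forall>s. s \<notin> U \<longrightarrow> \<sigma> s = \<tau> s)"
    and "\<And>\<sigma> \<tau> \<sigma>' \<tau>'. \<sigma> \<in> Cf \<Longrightarrow> \<tau> \<in> Cf \<Longrightarrow> \<sigma>' \<in> Cf \<Longrightarrow> \<tau>' \<in> Cf \<Longrightarrow>
       \<forall>s\<in>U. \<sigma> s = \<sigma>' s \<and> \<tau> s = \<tau>' s \<Longrightarrow> \<forall>s. s \<notin> U \<longrightarrow> \<sigma> s = \<tau> s \<Longrightarrow>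
       \<forall>s. s \<notin> U \<longrightarrow> \<sigma>' s = \<tau>' s \<Longrightarrow> x \<sigma> \<tau> = x \<sigma>' \<tau>'"
  shows "loc U x"
proof -
  have "x \<sigma> \<tau> = x \<sigma>' \<tau>'"
    if c: "\<sigma> \<in> Cf" "\<tau> \<in> Cf" "\<sigma>' \<in> Cf" "\<tau>' \<in> Cf" "\<forall>s\<in>U. \<sigma> s = \<sigma>' s \<and> \<tau> s = \<tau>' s"
      and off: "\<forall>s\<in>sites D - U. \<sigma> s = \<tau> s \<and> \<sigma>' s = \<tau>' s" for \<sigma> \<tau> \<sigma>' \<tau>'
  proof (rule assms(4)[OF c])
    have "\<sigma> s = \<tau> s \<and> \<sigma>' s = \<tau>' s" if "s \<notin> U" for s
      using that off Conf_outside_sites[OF c(1)] Conf_outside_sites[OF c(2)]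
        Conf_outside_sites[OF c(3)] Conf_outside_sites[OF c(4)]
      by (cases "s \<in> sites D") auto
    then show "\<forall>s. s \<notin> U \<longrightarrow> \<sigma> s = \<tau> s" "\<forall>s. s \<notin> U \<longrightarrow> \<sigma>' s = \<tau>' s"
      by auto
  qed
  then show ?thesis
    unfolding is_local_def using assms(1-3) by blast
qed

lemma op_mult_local_left:
  assumes "loc U x"
  shows "op_mult x y \<sigma> \<tau> = (\<Sum>\<rho>\<in>fiber U \<sigma>. x \<sigma> \<rho> * y \<rho> \<tau>)"
proof -
  have "x \<sigma> \<rho> = 0" if "\<rho> \<notin> fiber U \<sigma>" for \<rho>
    using that local_nonzeroD[OF assms, of \<sigma> \<rho>] unfolding fiber_def by fastforce
  then have "op_mult x y \<sigma> \<tau> = infsum (\<lambda>\<rho>. x \<sigma> \<rho> * y \<rho> \<tau>) (fiber U \<sigma>)"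
    unfolding op_mult_def by (intro infsum_cong_neutral) auto
  then show ?thesis
    using finite_fiber[OF local_finite[OF assms]] by simp
qed

lemma op_mult_local_right:
  assumes "loc U y"
  shows "op_mult x y \<sigma> \<tau> = (\<Sum>\<rho>\<in>fiber U \<tau>. x \<sigma> \<rho> * y \<rho> \<tau>)"
proof -
  have "y \<rho> \<tau> = 0" if "\<rho> \<notin> fiber U \<tau>" for \<rho>
    using that local_nonzeroD[OF assms, of \<rho> \<tau>] unfolding fiber_def by fastforce
  then have "op_mult x y \<sigma> \<tau> = infsum (\<lambda>\<rho>. x \<sigma> \<rho> * y \<rho> \<tau>) (fiber U \<tau>)"
    unfolding op_mult_def by (intro infsum_cong_neutral) auto
  then show ?thesis
    using finite_fiber[OF local_finite[OF assms]] by simp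
qed

lemma local_mono:
  assumes "loc U x" "U \<subseteq> V" "finite V" "V \<subseteq> sites D"
  shows "loc V x"
proof (rule localI[OF assms(3,4)])
  fix \<sigma> \<tau> assume "x \<sigma> \<tau> \<noteq> 0"
  then show "\<sigma> \<in> Cf \<and> \<tau> \<in> Cf \<and> (\<forall>s. s \<notin> V \<longrightarrow> \<sigma> s = \<tau> s)"
    using local_nonzeroD[OF assms(1)] assms(2) by blast
next
  fix \<sigma> \<tau> \<sigma>' \<tau>'
  assume c: "\<sigma> \<in> Cf" "\<tau> \<in> Cf" "\<sigma>' \<in> Cf" "\<tau>' \<in> Cf"
    and on: "\<forall>s\<in>V. \<sigma> s = \<sigma>' s \<and> \<tau> s = \<tau>' s"
    and off: "\<forall>s. s \<notin> V \<longrightarrow> \<sigma> s = \<tau> s" "\<forall>s. s \<notin> V \<longrightarrow> \<sigma>' s = \<tau>' s"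
  have "\<sigma> s = \<tau> s \<longleftrightarrow> \<sigma>' s = \<tau>' s" if "s \<notin> U" for s
    using on off by (cases "s \<in> V") auto
  then have same_diagonal: "(\<forall>s. s \<notin> U \<longrightarrow> \<sigma> s = \<tau> s) \<longleftrightarrow> (\<forall>s. s \<notin> U \<longrightarrow> \<sigma>' s = \<tau>' s)"
    by blast
  show "x \<sigma> \<tau> = x \<sigma>' \<tau>'"
  proof (cases "\<forall>s. s \<notin> U \<longrightarrow> \<sigma> s = \<tau> s")
    case True
    then show ?thesis
      using local_kernel_eq[OF assms(1) c] on same_diagonal assms(2) by blast
  next
    case False
    then have "x \<sigma> \<tau> = 0" "x \<sigma>' \<tau>' = 0"
      using local_vanishes[OF assms(1), of \<sigma> \<tau>] local_vanishes[OF assms(1), of \<sigma>' \<tau>'] same_diagonal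
      by auto
    then show ?thesis by simp
  qed
qed

lemma local_zero: "finite U \<Longrightarrow> U \<subseteq> sites D \<Longrightarrow> loc U 0"
  by (rule localI) auto

lemma local_one:
  assumes "finite U" "U \<subseteq> sites D"
  shows "loc U one"
proof (rule localI[OF assms])
  fix \<sigma> \<tau> assume "one \<sigma> \<tau> \<noteq> 0"
  then show "\<sigma> \<in> Cf \<and> \<tau> \<in> Cf \<and> (\<forall>s. s \<notin> U \<longrightarrow> \<sigma> s = \<tau> s)"
    by (auto simp: op_one_def split: if_splits)
next
  fix \<sigma> \<tau> \<sigma>' \<tau>'
  assume c: "\<sigma> \<in> Cf" "\<tau> \<in> Cf" "\<sigma>' \<in> Cf" "\<tau>' \<in> Cf"
    and on: "\<forall>s\<in>U. \<sigma> s = \<sigma>' s \<and> \<tau> s = \<tau>' s"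
    and off: "\<forall>s. s \<notin> U \<longrightarrow> \<sigma> s = \<tau> s" "\<forall>s. s \<notin> U \<longrightarrow> \<sigma>' s = \<tau>' s"
  have "(\<forall>s. \<sigma> s = \<tau> s) \<longleftrightarrow> (\<forall>s. \<sigma>' s = \<tau>' s)"
  proof -
    have "\<sigma> s = \<tau> s \<longleftrightarrow> \<sigma>' s = \<tau>' s" for s
      using on off by (cases "s \<in> U") auto
    then show ?thesis by blast
  qed
  then show "one \<sigma> \<tau> = one \<sigma>' \<tau>'"
    using c by (simp add: op_one_def fun_eq_iff)
qed

lemma local_add:
  assumes "loc U x" "loc U y"
  shows "loc U (x + y)"
proof (rule localI[OF local_finite[OF assms(1)] local_subset_sites[OF assms(1)]])
  fix \<sigma> \<tau> assume "(x + y) \<sigma> \<tau> \<noteq> 0"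
  then have "x \<sigma> \<tau> \<noteq> 0 \<or> y \<sigma> \<tau> \<noteq> 0"
    by auto
  then show "\<sigma> \<in> Cf \<and> \<tau> \<in> Cf \<and> (\<forall>s. s \<notin> U \<longrightarrow> \<sigma> s = \<tau> s)"
    using local_nonzeroD[OF assms(1)] local_nonzeroD[OF assms(2)] by blast
next
  fix \<sigma> \<tau> \<sigma>' \<tau>'
  assume "\<sigma> \<in> Cf" "\<tau> \<in> Cf" "\<sigma>' \<in> Cf" "\<tau>' \<in> Cf" "\<forall>s\<in>U. \<sigma> s = \<sigma>' s \<and> \<tau> s = \<tau>' s"
    "\<forall>s. s \<notin> U \<longrightarrow> \<sigma> s = \<tau> s" "\<forall>s. s \<notin> U \<longrightarrow> \<sigma>' s = \<tau>' s"
  from local_kernel_eq[OF assms(1) this] local_kernel_eq[OF assms(2) this]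
  show "(x + y) \<sigma> \<tau> = (x + y) \<sigma>' \<tau>'"
    by simp
qed

lemma local_scale:
  assumes "loc U x"
  shows "loc U (op_scale c x)"
proof (rule localI[OF local_finite[OF assms] local_subset_sites[OF assms]])
  fix \<sigma> \<tau> assume "op_scale c x \<sigma> \<tau> \<noteq> 0"
  then have "x \<sigma> \<tau> \<noteq> 0"
    by (simp add: op_scale_def)
  then show "\<sigma> \<in> Cf \<and> \<tau> \<in> Cf \<and> (\<forall>s. s \<notin> U \<longrightarrow> \<sigma> s = \<tau> s)"
    using local_nonzeroD[OF assms] by blast
next
  fix \<sigma> \<tau> \<sigma>' \<tau>'
  assume "\<sigma> \<in> Cf" "\<tau> \<in> Cf" "\<sigma>' \<in> Cf" "\<tau>' \<in> Cf" "\<forall>s\<in>U. \<sigma> s = \<sigma>' s \<and> \<tau> s = \<tau>' s"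
    "\<forall>s. s \<notin> U \<longrightarrow> \<sigma> s = \<tau> s" "\<forall>s. s \<notin> U \<longrightarrow> \<sigma>' s = \<tau>' s"
  from local_kernel_eq[OF assms this]
  show "op_scale c x \<sigma> \<tau> = op_scale c x \<sigma>' \<tau>'"
    by (simp add: op_scale_def)
qed

lemma local_diff: "loc U x \<Longrightarrow> loc U y \<Longrightarrow> loc U (x - y)"
  using local_add[of U x "op_scale (-1) y"] local_scale[of U y "-1"]
  by (simp add: op_scale_minus_one)

lemma local_sum:
  "finite U \<Longrightarrow> U \<subseteq> sites D \<Longrightarrow> (\<And>k. k \<in> K \<Longrightarrow> loc U (f k)) \<Longrightarrow> loc U (\<Sum>k\<in>K. f k)"
  by (induction K rule: infinite_finite_induct) (auto intro: local_zero local_add)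

lemma local_adj:
  assumes "loc U x"
  shows "loc U (op_adj x)"
proof (rule localI[OF local_finite[OF assms] local_subset_sites[OF assms]])
  fix \<sigma> \<tau> assume "op_adj x \<sigma> \<tau> \<noteq> 0"
  then show "\<sigma> \<in> Cf \<and> \<tau> \<in> Cf \<and> (\<forall>s. s \<notin> U \<longrightarrow> \<sigma> s = \<tau> s)"
    using local_nonzeroD[OF assms, of \<tau> \<sigma>] by (auto simp: op_adj_def)
next
  fix \<sigma> \<tau> \<sigma>' \<tau>'
  assume c: "\<sigma> \<in> Cf" "\<tau> \<in> Cf" "\<sigma>' \<in> Cf" "\<tau>' \<in> Cf"
    and "\<forall>s\<in>U. \<sigma> s = \<sigma>' s \<and> \<tau> s = \<tau>' s" "\<forall>s. s \<notin> U \<longrightarrow> \<sigma> s = \<tau> s" "\<forall>s. s \<notin> U \<longrightarrow> \<sigma>' s = \<tau>' s"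
  then have "x \<tau> \<sigma> = x \<tau>' \<sigma>'"
    by (intro local_kernel_eq[OF assms c(2,1,4,3)]) auto
  then show "op_adj x \<sigma> \<tau> = op_adj x \<sigma>' \<tau>'"
    by (simp add: op_adj_def)
qed

text \<open>The kernel of a product at \<open>(\<sigma>', \<tau>')\<close> is computed on the fiber of \<open>\<sigma>'\<close>,
  which \<open>override_on \<sigma>'\<close> identifies with the fiber of \<open>\<sigma>\<close>.\<close>

lemma local_mult:
  assumes "loc U x" "loc U y"
  shows "loc U (op_mult x y)"
proof (rule localI[OF local_finite[OF assms(1)] local_subset_sites[OF assms(1)]])
  fix \<sigma> \<tau> assume "op_mult x y \<sigma> \<tau> \<noteq> 0"
  then obtain \<rho> where "x \<sigma> \<rho> * y \<rho> \<tau> \<noteq> 0"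
    unfolding op_mult_local_left[OF assms(1)] by (rule sum.not_neutral_contains_not_neutral)
  then have "x \<sigma> \<rho> \<noteq> 0" "y \<rho> \<tau> \<noteq> 0"
    by auto
  from local_nonzeroD[OF assms(1) this(1)] local_nonzeroD[OF assms(2) this(2)]
  show "\<sigma> \<in> Cf \<and> \<tau> \<in> Cf \<and> (\<forall>s. s \<notin> U \<longrightarrow> \<sigma> s = \<tau> s)"
    by auto
next
  fix \<sigma> \<tau> \<sigma>' \<tau>'
  assume c: "\<sigma> \<in> Cf" "\<tau> \<in> Cf" "\<sigma>' \<in> Cf" "\<tau>' \<in> Cf"
    and on: "\<forall>s\<in>U. \<sigma> s = \<sigma>' s \<and> \<tau> s = \<tau>' s"
    and off: "\<forall>s. s \<notin> U \<longrightarrow> \<sigma> s = \<tau> s" "\<forall>s. s \<notin> U \<longrightarrow> \<sigma>' s = \<tau>' s"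
  have bij: "bij_betw (\<lambda>\<rho>. override_on \<sigma>' \<rho> U) (fiber U \<sigma>) (fiber U \<sigma>')"
  proof (rule bij_betw_byWitness[where f' = "\<lambda>\<rho>. override_on \<sigma> \<rho> U"])
    show "\<forall>\<rho>\<in>fiber U \<sigma>. override_on \<sigma> (override_on \<sigma>' \<rho> U) U = \<rho>"
      "\<forall>\<rho>\<in>fiber U \<sigma>'. override_on \<sigma>' (override_on \<sigma> \<rho> U) U = \<rho>"
      by (auto simp: fiber_def override_on_def fun_eq_iff)
    show "(\<lambda>\<rho>. override_on \<sigma>' \<rho> U) ` fiber U \<sigma> \<subseteq> fiber U \<sigma>'"
      "(\<lambda>\<rho>. override_on \<sigma> \<rho> U) ` fiber U \<sigma>' \<subseteq> fiber U \<sigma>"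
      using override_on_fiber c(1,3) by (auto simp: fiber_def)
  qed
  have "op_mult x y \<sigma>' \<tau>' =
      (\<Sum>\<rho>\<in>fiber U \<sigma>. x \<sigma>' (override_on \<sigma>' \<rho> U) * y (override_on \<sigma>' \<rho> U) \<tau>')"
    unfolding op_mult_local_left[OF assms(1)] by (rule sum.reindex_bij_betw[OF bij, symmetric])
  also have "\<dots> = (\<Sum>\<rho>\<in>fiber U \<sigma>. x \<sigma> \<rho> * y \<rho> \<tau>)"
  proof (rule sum.cong[OF refl])
    fix \<rho> assume "\<rho> \<in> fiber U \<sigma>"
    then have \<rho>: "\<rho> \<in> Cf" "\<forall>s. s \<notin> U \<longrightarrow> \<rho> s = \<sigma> s"
      by (auto simp: fiber_def)
    have oc: "override_on \<sigma>' \<rho> U \<in> Cf"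
      using override_on_Conf[OF c(3) \<rho>(1)] .
    have "x \<sigma> \<rho> = x \<sigma>' (override_on \<sigma>' \<rho> U)"
      by (rule local_kernel_eq[OF assms(1) c(1) \<rho>(1) c(3) oc]) (use on \<rho>(2) in auto)
    moreover have "y \<rho> \<tau> = y (override_on \<sigma>' \<rho> U) \<tau>'"
      by (rule local_kernel_eq[OF assms(2) \<rho>(1) c(2) oc c(4)]) (use on off \<rho>(2) in auto)
    ultimately show "x \<sigma>' (override_on \<sigma>' \<rho> U) * y (override_on \<sigma>' \<rho> U) \<tau>' = x \<sigma> \<rho> * y \<rho> \<tau>"
      by simp
  qed
  also have "\<dots> = op_mult x y \<sigma> \<tau>"
    unfolding op_mult_local_left[OF assms(1)] ..
  finally show "op_mult x y \<sigma> \<tau> = op_mult x y \<sigma>' \<tau>'"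
    by simp
qed

lemma Mat_iff_local: "x \<in> M \<longleftrightarrow> (\<exists>U. loc U x)"
  by (simp add: Mat_def)

lemma MatI: "loc U x \<Longrightarrow> x \<in> M"
  by (auto simp: Mat_def)

lemma Mat_common_support:
  assumes "finite X" "X \<subseteq> M"
  shows "\<exists>U. finite U \<and> U \<subseteq> sites D \<and> (\<forall>x\<in>X. loc U x)"
  using assms
proof (induction X rule: finite_induct)
  case (insert x X)
  then obtain U where U: "finite U" "U \<subseteq> sites D" "\<forall>x\<in>X. loc U x"
    by auto
  obtain V where V: "loc V x"
    using insert(4) Mat_iff_local by auto
  have "finite (U \<union> V)" "U \<union> V \<subseteq> sites D"
    using U V local_finite local_subset_sites by auto
  then show ?case
    using U V local_mono by (metis Un_upper1 Un_upper2 insert_iff)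
qed auto

lemma Mat_common_support2: "x \<in> M \<Longrightarrow> y \<in> M \<Longrightarrow> \<exists>U. loc U x \<and> loc U y"
  using Mat_common_support[of "{x, y}"] by auto

lemma Mat_zero: "0 \<in> M"
  using local_zero[of "{}"] MatI by auto

lemma Mat_one: "one \<in> M"
  using local_one[of "{}"] MatI by auto

lemma Mat_add: "x \<in> M \<Longrightarrow> y \<in> M \<Longrightarrow> x + y \<in> M"
  using Mat_common_support2 local_add MatI by metis

lemma Mat_diff: "x \<in> M \<Longrightarrow> y \<in> M \<Longrightarrow> x - y \<in> M"
  using Mat_common_support2 local_diff MatI by metis

lemma Mat_mult: "x \<in> M \<Longrightarrow> y \<in> M \<Longrightarrow> op_mult x y \<in> M"
  using Mat_common_support2 local_mult MatI by metis

lemma Mat_scale: "x \<in> M \<Longrightarrow> op_scale c x \<in> M"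
  using local_scale Mat_iff_local by metis

lemma Mat_adj: "x \<in> M \<Longrightarrow> op_adj x \<in> M"
  using local_adj Mat_iff_local by metis

lemma Mat_sum: "(\<And>k. k \<in> K \<Longrightarrow> f k \<in> M) \<Longrightarrow> (\<Sum>k\<in>K. f k) \<in> M"
  by (induction K rule: infinite_finite_induct) (auto intro: Mat_zero Mat_add)

lemma op_mult_assoc:
  assumes "x \<in> M" "y \<in> M"
  shows "op_mult (op_mult x y) z = op_mult x (op_mult y z)"
proof (intro ext)
  fix \<sigma> \<tau>
  obtain U where U: "loc U x" "loc U y"
    using Mat_common_support2[OF assms] by blast
  have "op_mult (op_mult x y) z \<sigma> \<tau> =
      (\<Sum>\<rho>\<in>fiber U \<sigma>. \<Sum>\<pi>\<in>fiber U \<sigma>. x \<sigma> \<pi> * y \<pi> \<rho> * z \<rho> \<tau>)"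
    unfolding op_mult_local_left[OF local_mult[OF U]] op_mult_local_left[OF U(1)]
    by (simp add: sum_distrib_right)
  also have "\<dots> = (\<Sum>\<pi>\<in>fiber U \<sigma>. \<Sum>\<rho>\<in>fiber U \<sigma>. x \<sigma> \<pi> * y \<pi> \<rho> * z \<rho> \<tau>)"
    by (rule sum.swap)
  also have "\<dots> = (\<Sum>\<pi>\<in>fiber U \<sigma>. x \<sigma> \<pi> * (\<Sum>\<rho>\<in>fiber U \<pi>. y \<pi> \<rho> * z \<rho> \<tau>))"
    by (intro sum.cong refl) (simp add: fiber_eq_of_mem sum_distrib_left mult.assoc)
  also have "\<dots> = op_mult x (op_mult y z) \<sigma> \<tau>"
    unfolding op_mult_local_left[OF U(1)] op_mult_local_left[OF U(2)] ..
  finally show "op_mult (op_mult x y) z \<sigma> \<tau> = op_mult x (op_mult y z) \<sigma> \<tau>" .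
qed

lemma op_mult_add_right: "x \<in> M \<Longrightarrow> op_mult x (y + z) = op_mult x y + op_mult x z"
  and op_mult_scale_right: "x \<in> M \<Longrightarrow> op_mult x (op_scale c y) = op_scale c (op_mult x y)"
  unfolding Mat_iff_local
  by (auto simp: fun_eq_iff op_mult_local_left op_scale_def distrib_left right_diff_distrib
      sum.distrib sum_subtractf sum_distrib_left mult.left_commute)

lemma op_mult_add_left: "z \<in> M \<Longrightarrow> op_mult (x + y) z = op_mult x z + op_mult y z"
  and op_mult_diff_left: "z \<in> M \<Longrightarrow> op_mult (x - y) z = op_mult x z - op_mult y z"
  and op_mult_scale_left: "z \<in> M \<Longrightarrow> op_mult (op_scale c x) z = op_scale c (op_mult x z)"
  unfolding Mat_iff_local
  by (auto simp: fun_eq_iff op_mult_local_right op_scale_def distrib_right left_diff_distrib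
      sum.distrib sum_subtractf sum_distrib_left mult.assoc)

lemma op_mult_minus_left: "z \<in> M \<Longrightarrow> op_mult (- x) z = - op_mult x z"
  using op_mult_diff_left[of z 0 x] by simp

lemma op_mult_sum_right: "x \<in> M \<Longrightarrow> op_mult x (\<Sum>k\<in>K. f k) = (\<Sum>k\<in>K. op_mult x (f k))"
  by (induction K rule: infinite_finite_induct) (auto simp: op_mult_add_right)

lemma op_mult_sum_left: "z \<in> M \<Longrightarrow> op_mult (\<Sum>k\<in>K. f k) z = (\<Sum>k\<in>K. op_mult (f k) z)"
  by (induction K rule: infinite_finite_induct) (auto simp: op_mult_add_left)

lemma op_mult_sum_list_right: "x \<in> M \<Longrightarrow> op_mult x (sum_list ys) = sum_list (map (op_mult x) ys)"
  by (induction ys) (auto simp: op_mult_add_right)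

lemma fiber_empty: "fiber {} \<sigma> = (if \<sigma> \<in> Cf then {\<sigma>} else {})"
proof -
  have "fiber {} \<sigma> = {\<rho> \<in> Cf. \<rho> = \<sigma>}"
    by (auto simp: fiber_def fun_eq_iff)
  then show ?thesis by auto
qed

lemma op_mult_one_left: "x \<in> M \<Longrightarrow> op_mult one x = x"
  and op_mult_one_right: "x \<in> M \<Longrightarrow> op_mult x one = x"
proof -
  have one: "loc {} one"
    by (rule local_one) auto
  assume "x \<in> M"
  then obtain U where "loc U x"
    using Mat_iff_local by blast
  then show "op_mult one x = x" "op_mult x one = x"
    unfolding fun_eq_iff op_mult_local_left[OF one] op_mult_local_right[OF one] fiber_empty
    using local_vanishes by (auto simp: op_one_def)
qed

lemma op_scale_eq_mult: "x \<in> M \<Longrightarrow> op_scale c x = op_mult (op_scale c one) x"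
  by (simp add: op_mult_scale_left op_mult_one_left)

subsection \<open>Matrix units\<close>

abbreviation confs_on :: "site set \<Rightarrow> conf set" where
  "confs_on U \<equiv> fiber U (\<lambda>_. 0)"

definition restrict_conf :: "site set \<Rightarrow> conf \<Rightarrow> conf" where
  "restrict_conf U \<sigma> = override_on (\<lambda>_. 0) \<sigma> U"

text \<open>The matrix unit \<open>|\<alpha>\<rangle>\<langle>\<beta>|\<close> on the sites \<open>U\<close>, tensored with the identity elsewhere.\<close>

definition mat_unit :: "site set \<Rightarrow> conf \<Rightarrow> conf \<Rightarrow> op" where
  "mat_unit U \<alpha> \<beta> = (\<lambda>\<sigma> \<tau>. if \<sigma> \<in> Cf \<and> \<tau> \<in> Cf \<and> (\<forall>s\<in>U. \<sigma> s = \<alpha> s \<and> \<tau> s = \<beta> s) \<and>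
     (\<forall>s. s \<notin> U \<longrightarrow> \<sigma> s = \<tau> s) then 1 else 0)"

lemma restrict_conf_in_confs_on: "\<sigma> \<in> Cf \<Longrightarrow> restrict_conf U \<sigma> \<in> confs_on U"
  unfolding restrict_conf_def using override_on_fiber zero_in_Conf by blast

lemma confs_on_eq_restrict_conf:
  "\<gamma> \<in> confs_on U \<Longrightarrow> (\<forall>s\<in>U. \<sigma> s = \<gamma> s) \<longleftrightarrow> \<gamma> = restrict_conf U \<sigma>"
  by (auto simp: restrict_conf_def override_on_def fiber_def fun_eq_iff)

lemma override_on_confs_on: "a \<in> confs_on U \<Longrightarrow> b \<in> confs_on U \<Longrightarrow> override_on a b U = b"
  by (auto simp: fiber_def override_on_def fun_eq_iff)

lemma confs_on_eqI:
  assumes "a \<in> confs_on U" "b \<in> confs_on U" "\<forall>s\<in>U. b s = a s"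
  shows "a = b"
proof
  fix s
  show "a s = b s"
    using assms by (cases "s \<in> U") (auto simp: fiber_def)
qed

lemma restrict_conf_eq_iff:
  assumes "\<forall>s. s \<notin> U \<longrightarrow> \<sigma> s = \<tau> s"
  shows "restrict_conf U \<sigma> = restrict_conf U \<tau> \<longleftrightarrow> \<sigma> = \<tau>"
proof
  assume eq: "restrict_conf U \<sigma> = restrict_conf U \<tau>"
  have "\<sigma> s = \<tau> s" for s
    using assms fun_cong[OF eq, of s] by (cases "s \<in> U") (auto simp: restrict_conf_def)
  then show "\<sigma> = \<tau>" ..
qed simp

lemma local_kernel_restrict_conf:
  assumes "loc U w" "\<sigma> \<in> Cf" "\<tau> \<in> Cf" "\<forall>s. s \<notin> U \<longrightarrow> \<sigma> s = \<tau> s"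
  shows "w (restrict_conf U \<sigma>) (restrict_conf U \<tau>) = w \<sigma> \<tau>"
  using assms restrict_conf_in_confs_on[of _ U]
  by (intro local_kernel_eq[OF assms(1)]) (auto simp: fiber_def restrict_conf_def)

lemma local_mat_unit: "finite U \<Longrightarrow> U \<subseteq> sites D \<Longrightarrow> loc U (mat_unit U \<alpha> \<beta>)"
  by (rule localI) (auto simp: mat_unit_def split: if_splits)

lemma mat_unit_empty: "mat_unit {} \<alpha> \<beta> = one"
proof (intro ext)
  fix \<sigma> \<tau> :: conf
  show "mat_unit {} \<alpha> \<beta> \<sigma> \<tau> = one \<sigma> \<tau>"
    by (cases "\<sigma> = \<tau>") (auto simp: mat_unit_def op_one_def)
qed

lemma mat_unit_mult_apply:
  assumes "finite U" "U \<subseteq> sites D" "\<alpha> \<in> Cf"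
  shows "op_mult (mat_unit U \<gamma> \<alpha>) w \<sigma> \<rho> =
    (if \<sigma> \<in> Cf \<and> (\<forall>s\<in>U. \<sigma> s = \<gamma> s) then w (override_on \<sigma> \<alpha> U) \<rho> else 0)"
proof -
  have "op_mult (mat_unit U \<gamma> \<alpha>) w \<sigma> \<rho> = (\<Sum>\<pi>\<in>fiber U \<sigma>. mat_unit U \<gamma> \<alpha> \<sigma> \<pi> * w \<pi> \<rho>)"
    by (rule op_mult_local_left[OF local_mat_unit[OF assms(1,2)]])
  also have "\<dots> = (\<Sum>\<pi>\<in>fiber U \<sigma>. if \<pi> = override_on \<sigma> \<alpha> U
      then (if \<sigma> \<in> Cf \<and> (\<forall>s\<in>U. \<sigma> s = \<gamma> s) then w \<pi> \<rho> else 0) else 0)"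
  proof (rule sum.cong[OF refl])
    fix \<pi> assume "\<pi> \<in> fiber U \<sigma>"
    then have "\<pi> \<in> Cf" "\<forall>s. s \<notin> U \<longrightarrow> \<pi> s = \<sigma> s"
      by (auto simp: fiber_def)
    moreover from this have "(\<forall>s\<in>U. \<pi> s = \<alpha> s) \<longleftrightarrow> \<pi> = override_on \<sigma> \<alpha> U"
      by (auto simp: override_on_def fun_eq_iff)
    ultimately show "mat_unit U \<gamma> \<alpha> \<sigma> \<pi> * w \<pi> \<rho> = (if \<pi> = override_on \<sigma> \<alpha> U
        then (if \<sigma> \<in> Cf \<and> (\<forall>s\<in>U. \<sigma> s = \<gamma> s) then w \<pi> \<rho> else 0) else 0)"
      by (auto simp: mat_unit_def)
  qed
  also have "\<dots> = (if \<sigma> \<in> Cf \<and> (\<forall>s\<in>U. \<sigma> s = \<gamma> s) then w (override_on \<sigma> \<alpha> U) \<rho> else 0)"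
    using override_on_fiber[of \<sigma> \<alpha> U] assms(3) finite_fiber[OF assms(1)]
    by (auto simp: sum.delta')
  finally show ?thesis .
qed

lemma mult_mat_unit_apply:
  assumes "finite U" "U \<subseteq> sites D" "\<beta> \<in> Cf"
  shows "op_mult x (mat_unit U \<beta> \<delta>) \<rho> \<tau> =
    (if \<tau> \<in> Cf \<and> (\<forall>s\<in>U. \<tau> s = \<delta> s) then x \<rho> (override_on \<tau> \<beta> U) else 0)"
proof -
  have "op_mult x (mat_unit U \<beta> \<delta>) \<rho> \<tau> = (\<Sum>\<pi>\<in>fiber U \<tau>. x \<rho> \<pi> * mat_unit U \<beta> \<delta> \<pi> \<tau>)"
    by (rule op_mult_local_right[OF local_mat_unit[OF assms(1,2)]])
  also have "\<dots> = (\<Sum>\<pi>\<in>fiber U \<tau>. if \<pi> = override_on \<tau> \<beta> U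
      then (if \<tau> \<in> Cf \<and> (\<forall>s\<in>U. \<tau> s = \<delta> s) then x \<rho> \<pi> else 0) else 0)"
  proof (rule sum.cong[OF refl])
    fix \<pi> assume "\<pi> \<in> fiber U \<tau>"
    then have "\<pi> \<in> Cf" "\<forall>s. s \<notin> U \<longrightarrow> \<pi> s = \<tau> s"
      by (auto simp: fiber_def)
    moreover from this have "(\<forall>s\<in>U. \<pi> s = \<beta> s) \<longleftrightarrow> \<pi> = override_on \<tau> \<beta> U"
      by (auto simp: override_on_def fun_eq_iff)
    ultimately show "x \<rho> \<pi> * mat_unit U \<beta> \<delta> \<pi> \<tau> = (if \<pi> = override_on \<tau> \<beta> U
        then (if \<tau> \<in> Cf \<and> (\<forall>s\<in>U. \<tau> s = \<delta> s) then x \<rho> \<pi> else 0) else 0)"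
      by (auto simp: mat_unit_def)
  qed
  also have "\<dots> = (if \<tau> \<in> Cf \<and> (\<forall>s\<in>U. \<tau> s = \<delta> s) then x \<rho> (override_on \<tau> \<beta> U) else 0)"
    using override_on_fiber[of \<tau> \<beta> U] assms(3) finite_fiber[OF assms(1)]
    by (auto simp: sum.delta')
  finally show ?thesis .
qed

lemma mat_unit_sandwich:
  assumes w: "loc U w" and \<alpha>\<beta>: "\<alpha> \<in> confs_on U" "\<beta> \<in> confs_on U"
  shows "op_mult (op_mult (mat_unit U \<gamma> \<alpha>) w) (mat_unit U \<beta> \<delta>) = op_scale (w \<alpha> \<beta>) (mat_unit U \<gamma> \<delta>)"
proof (intro ext)
  fix \<sigma> \<tau>
  have U: "finite U" "U \<subseteq> sites D"
    using local_finite[OF w] local_subset_sites[OF w] by auto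
  have c: "\<alpha> \<in> Cf" "\<beta> \<in> Cf"
    using \<alpha>\<beta> by (auto simp: fiber_def)
  have "w (override_on \<sigma> \<alpha> U) (override_on \<tau> \<beta> U) =
      (if \<forall>s. s \<notin> U \<longrightarrow> \<sigma> s = \<tau> s then w \<alpha> \<beta> else 0)" if "\<sigma> \<in> Cf" "\<tau> \<in> Cf"
  proof (cases "\<forall>s. s \<notin> U \<longrightarrow> \<sigma> s = \<tau> s")
    case True
    have "w (override_on \<sigma> \<alpha> U) (override_on \<tau> \<beta> U) = w \<alpha> \<beta>"
      by (rule local_kernel_eq[OF w override_on_Conf override_on_Conf c])
        (use True that c \<alpha>\<beta> in \<open>auto simp: fiber_def\<close>)
    then show ?thesis
      using True by simp
  next
    case False
    then obtain s where "s \<notin> U" "\<sigma> s \<noteq> \<tau> s"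
      by blast
    then have "w (override_on \<sigma> \<alpha> U) (override_on \<tau> \<beta> U) = 0"
      by (intro local_vanishes[OF w]) auto
    then show ?thesis
      using False by auto
  qed
  then show "op_mult (op_mult (mat_unit U \<gamma> \<alpha>) w) (mat_unit U \<beta> \<delta>) \<sigma> \<tau> =
      op_scale (w \<alpha> \<beta>) (mat_unit U \<gamma> \<delta>) \<sigma> \<tau>"
    unfolding mult_mat_unit_apply[OF U c(2)] mat_unit_mult_apply[OF U c(1)]
    by (auto simp: mat_unit_def op_scale_def)
qed

lemma sum_mat_unit_diagonal:
  assumes "finite U"
  shows "(\<Sum>\<gamma>\<in>confs_on U. mat_unit U \<gamma> \<gamma>) = one"
proof (intro ext)
  fix \<sigma> \<tau>
  have "mat_unit U \<gamma> \<gamma> \<sigma> \<tau> = (if \<gamma> = restrict_conf U \<sigma> then one \<sigma> \<tau> else 0)"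
    if "\<gamma> \<in> confs_on U" for \<gamma>
  proof (cases "\<sigma> = \<tau>")
    case False
    then have "\<not> ((\<forall>s\<in>U. \<sigma> s = \<gamma> s \<and> \<tau> s = \<gamma> s) \<and> (\<forall>s. s \<notin> U \<longrightarrow> \<sigma> s = \<tau> s))"
      by (metis ext)
    then have "mat_unit U \<gamma> \<gamma> \<sigma> \<tau> = 0"
      by (simp add: mat_unit_def)
    moreover have "one \<sigma> \<tau> = 0"
      using False by (simp add: op_one_def)
    ultimately show ?thesis
      by simp
  qed (use confs_on_eq_restrict_conf[OF that, of \<sigma>] in \<open>auto simp: mat_unit_def op_one_def\<close>)
  then have "(\<Sum>\<gamma>\<in>confs_on U. mat_unit U \<gamma> \<gamma>) \<sigma> \<tau> =
      (\<Sum>\<gamma>\<in>confs_on U. if \<gamma> = restrict_conf U \<sigma> then one \<sigma> \<tau> else 0)"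
    by (simp add: op_sum_apply)
  also have "\<dots> = one \<sigma> \<tau>"
    using restrict_conf_in_confs_on[of \<sigma> U] finite_fiber[OF assms]
    by (cases "\<sigma> \<in> Cf") (simp_all add: sum.delta' op_one_def)
  finally show "(\<Sum>\<gamma>\<in>confs_on U. mat_unit U \<gamma> \<gamma>) \<sigma> \<tau> = one \<sigma> \<tau>" .
qed

lemma mat_unit_expansion:
  assumes w: "loc U w"
  shows "w = (\<Sum>\<alpha>\<in>confs_on U. \<Sum>\<beta>\<in>confs_on U. op_scale (w \<alpha> \<beta>) (mat_unit U \<alpha> \<beta>))"
proof (intro ext)
  fix \<sigma> \<tau>
  have U: "finite U"
    using local_finite[OF w] .
  show "w \<sigma> \<tau> = (\<Sum>\<alpha>\<in>confs_on U. \<Sum>\<beta>\<in>confs_on U. op_scale (w \<alpha> \<beta>) (mat_unit U \<alpha> \<beta>)) \<sigma> \<tau>"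
  proof (cases "\<sigma> \<in> Cf \<and> \<tau> \<in> Cf \<and> (\<forall>s. s \<notin> U \<longrightarrow> \<sigma> s = \<tau> s)")
    case True
    then have "op_scale (w \<alpha> \<beta>) (mat_unit U \<alpha> \<beta>) \<sigma> \<tau> =
        (if \<alpha> = restrict_conf U \<sigma> then if \<beta> = restrict_conf U \<tau> then w \<alpha> \<beta> else 0 else 0)"
      if "\<alpha> \<in> confs_on U" "\<beta> \<in> confs_on U" for \<alpha> \<beta>
      using confs_on_eq_restrict_conf[OF that(1), of \<sigma>] confs_on_eq_restrict_conf[OF that(2), of \<tau>]
      by (auto simp: mat_unit_def op_scale_def)
    then have "(\<Sum>\<alpha>\<in>confs_on U. \<Sum>\<beta>\<in>confs_on U. op_scale (w \<alpha> \<beta>) (mat_unit U \<alpha> \<beta>)) \<sigma> \<tau> =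
        (\<Sum>\<alpha>\<in>confs_on U. \<Sum>\<beta>\<in>confs_on U.
          if \<alpha> = restrict_conf U \<sigma> then if \<beta> = restrict_conf U \<tau> then w \<alpha> \<beta> else 0 else 0)"
      by (simp add: op_sum_apply cong: sum.cong)
    also have "\<dots> = (\<Sum>\<alpha>\<in>confs_on U. if \<alpha> = restrict_conf U \<sigma>
        then (\<Sum>\<beta>\<in>confs_on U. if \<beta> = restrict_conf U \<tau> then w \<alpha> \<beta> else 0) else 0)"
      by (intro sum.cong refl) simp
    also have "\<dots> = w (restrict_conf U \<sigma>) (restrict_conf U \<tau>)"
      using True restrict_conf_in_confs_on[of \<sigma> U] restrict_conf_in_confs_on[of \<tau> U] finite_fiber[OF U]
      by (simp add: sum.delta)
    also have "\<dots> = w \<sigma> \<tau>"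
      using True local_kernel_restrict_conf[OF w] by blast
    finally show ?thesis ..
  next
    case False
    then have "mat_unit U \<alpha> \<beta> \<sigma> \<tau> = 0" for \<alpha> \<beta>
      by (auto simp: mat_unit_def)
    then show ?thesis
      using local_vanishes[OF w] False by (simp add: op_sum_apply op_scale_def)
  qed
qed

lemma mat_unit_insert:
  assumes "s \<in> sites D" "s \<notin> U" "\<beta> \<in> Cf"
  shows "mat_unit (insert s U) \<alpha> \<beta> = op_mult (mat_unit {s} \<alpha> \<beta>) (mat_unit U \<alpha> \<beta>)"
proof (intro ext)
  fix \<sigma> \<tau>
  have "override_on \<sigma> \<beta> {s} = \<sigma>(s := \<beta> s)"
    by (auto simp: override_on_def)
  then have "op_mult (mat_unit {s} \<alpha> \<beta>) (mat_unit U \<alpha> \<beta>) \<sigma> \<tau> =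
      (if \<sigma> \<in> Cf \<and> \<sigma> s = \<alpha> s then mat_unit U \<alpha> \<beta> (\<sigma>(s := \<beta> s)) \<tau> else 0)"
    using mat_unit_mult_apply[of "{s}" \<beta> \<alpha> "mat_unit U \<alpha> \<beta>" \<sigma> \<tau>] assms(1,3) by simp
  also have "\<dots> = mat_unit (insert s U) \<alpha> \<beta> \<sigma> \<tau>"
  proof (cases "\<sigma> \<in> Cf")
    case True
    then have "\<sigma>(s := \<beta> s) \<in> Cf"
      using override_on_Conf[OF True assms(3), of "{s}"] \<open>override_on \<sigma> \<beta> {s} = \<sigma>(s := \<beta> s)\<close>
      by simp
    then show ?thesis
      using True assms(2) by (auto simp: mat_unit_def)
  qed (simp add: mat_unit_def)
  finally show "mat_unit (insert s U) \<alpha> \<beta> \<sigma> \<tau> = op_mult (mat_unit {s} \<alpha> \<beta>) (mat_unit U \<alpha> \<beta>) \<sigma> \<tau>"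
    by simp
qed

lemma Mat_mat_unit: "finite U \<Longrightarrow> U \<subseteq> sites D \<Longrightarrow> mat_unit U \<alpha> \<beta> \<in> M"
  using local_mat_unit MatI by blast

lemma commute_mat_unit_apply:
  assumes "finite U" "U \<subseteq> sites D" "\<alpha> \<in> Cf" "\<beta> \<in> Cf"
    and "op_mult (mat_unit U \<alpha> \<beta>) z = op_mult z (mat_unit U \<alpha> \<beta>)"
  shows "(if \<sigma> \<in> Cf \<and> (\<forall>s\<in>U. \<sigma> s = \<alpha> s) then z (override_on \<sigma> \<beta> U) \<tau> else 0) =
    (if \<tau> \<in> Cf \<and> (\<forall>s\<in>U. \<tau> s = \<beta> s) then z \<sigma> (override_on \<tau> \<alpha> U) else 0)"
proof -
  have "op_mult (mat_unit U \<alpha> \<beta>) z \<sigma> \<tau> = op_mult z (mat_unit U \<alpha> \<beta>) \<sigma> \<tau>"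
    using assms(5) by simp
  then show ?thesis
    by (simp add: mat_unit_mult_apply[OF assms(1,2)] mult_mat_unit_apply[OF assms(1,2)] assms(3,4))
qed

text \<open>Commuting with the matrix units on a support \<open>U\<close> of \<open>z\<close> already forces \<open>z\<close> to be
  diagonal with constant diagonal.\<close>

lemma Mat_center_scalar:
  assumes z: "z \<in> M" and comm: "\<forall>x\<in>M. op_mult x z = op_mult z x"
  shows "z = op_scale (z (\<lambda>_. 0) (\<lambda>_. 0)) one"
proof -
  obtain U where zU: "loc U z"
    using z Mat_iff_local by blast
  have U: "finite U" "U \<subseteq> sites D"
    using local_finite[OF zU] local_subset_sites[OF zU] by auto
  have unit_comm: "(if \<sigma> \<in> Cf \<and> (\<forall>s\<in>U. \<sigma> s = \<alpha> s) then z (override_on \<sigma> \<beta> U) \<tau> else 0) =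
      (if \<tau> \<in> Cf \<and> (\<forall>s\<in>U. \<tau> s = \<beta> s) then z \<sigma> (override_on \<tau> \<alpha> U) else 0)"
    if "\<alpha> \<in> Cf" "\<beta> \<in> Cf" for \<alpha> \<beta> \<sigma> \<tau>
    using commute_mat_unit_apply[OF U that] comm Mat_mat_unit[OF U] by blast
  have off_diagonal: "z a b = 0" if ab: "a \<in> confs_on U" "b \<in> confs_on U" "a \<noteq> b" for a b
    using unit_comm[of a a a b] override_on_confs_on[of a U a] confs_on_eqI[of a U b] ab
    by (auto simp: fiber_def)
  have diagonal: "z b b = z a a" if ab: "a \<in> confs_on U" "b \<in> confs_on U" for a b
    using unit_comm[of a b a b] override_on_confs_on[OF ab] override_on_confs_on[OF ab(2,1)] ab
    by (auto simp: fiber_def)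
  have zero_confs_on: "(\<lambda>_. 0) \<in> confs_on U"
    using zero_in_Conf by (simp add: fiber_def)
  show ?thesis
  proof (intro ext)
    fix \<sigma> \<tau>
    show "z \<sigma> \<tau> = op_scale (z (\<lambda>_. 0) (\<lambda>_. 0)) one \<sigma> \<tau>"
    proof (cases "\<sigma> \<in> Cf \<and> \<tau> \<in> Cf \<and> (\<forall>s. s \<notin> U \<longrightarrow> \<sigma> s = \<tau> s)")
      case True
      have "z \<sigma> \<tau> = z (restrict_conf U \<sigma>) (restrict_conf U \<tau>)"
        using local_kernel_restrict_conf[OF zU] True by simp
      then show ?thesis
        using True restrict_conf_eq_iff off_diagonal diagonal[OF zero_confs_on] restrict_conf_in_confs_on
        by (auto simp: op_scale_def op_one_def)
    next
      case False
      then show ?thesis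
        using local_vanishes[OF zU] by (auto simp: op_scale_def op_one_def)
    qed
  qed
qed

lemma nonzero_sandwich_scalar:
  assumes "w \<in> M" "w \<noteq> 0"
  obtains U \<alpha> \<beta> c where "finite U" "U \<subseteq> sites D" "c \<noteq> 0"
    "(\<Sum>\<gamma>\<in>confs_on U. op_mult (op_mult (mat_unit U \<gamma> \<alpha>) w) (mat_unit U \<beta> \<gamma>)) = op_scale c one"
proof -
  obtain U where wU: "loc U w"
    using assms(1) Mat_iff_local by blast
  have "\<exists>\<sigma> \<tau>. w \<sigma> \<tau> \<noteq> 0"
  proof (rule ccontr)
    assume "\<not> (\<exists>\<sigma> \<tau>. w \<sigma> \<tau> \<noteq> 0)"
    then have "w = 0"
      by (intro ext) simp
    with assms(2) show False ..
  qed
  then obtain \<sigma> \<tau> where nz: "w \<sigma> \<tau> \<noteq> 0"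
    by blast
  then have c: "\<sigma> \<in> Cf" "\<tau> \<in> Cf" "\<forall>s. s \<notin> U \<longrightarrow> \<sigma> s = \<tau> s"
    using local_nonzeroD[OF wU] by blast+
  let ?\<alpha> = "restrict_conf U \<sigma>" and ?\<beta> = "restrict_conf U \<tau>"
  have \<alpha>\<beta>: "?\<alpha> \<in> confs_on U" "?\<beta> \<in> confs_on U"
    using restrict_conf_in_confs_on c by auto
  have "(\<Sum>\<gamma>\<in>confs_on U. op_mult (op_mult (mat_unit U \<gamma> ?\<alpha>) w) (mat_unit U ?\<beta> \<gamma>)) =
      op_scale (w ?\<alpha> ?\<beta>) (\<Sum>\<gamma>\<in>confs_on U. mat_unit U \<gamma> \<gamma>)"
    using mat_unit_sandwich[OF wU \<alpha>\<beta>] by (simp add: op_scale_sum)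
  also have "\<dots> = op_scale (w \<sigma> \<tau>) one"
    using sum_mat_unit_diagonal[OF local_finite[OF wU]] local_kernel_restrict_conf[OF wU c] by simp
  finally show thesis
    using that local_finite[OF wU] local_subset_sites[OF wU] nz by blast
qed

lemma op_mult_adj_diagonal:
  assumes "loc U y"
  shows "op_mult y (op_adj y) \<sigma> \<sigma> = of_real (\<Sum>\<rho>\<in>fiber U \<sigma>. (cmod (y \<sigma> \<rho>))\<^sup>2)"
proof -
  have "op_mult y (op_adj y) \<sigma> \<sigma> = (\<Sum>\<rho>\<in>fiber U \<sigma>. y \<sigma> \<rho> * cnj (y \<sigma> \<rho>))"
    unfolding op_mult_local_left[OF assms] op_adj_def ..
  also have "\<dots> = (\<Sum>\<rho>\<in>fiber U \<sigma>. of_real ((cmod (y \<sigma> \<rho>))\<^sup>2))"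
    by (simp only: complex_norm_square)
  finally show ?thesis
    by (simp only: of_real_sum)
qed

text \<open>Positivity: the diagonal of \<open>\<Sum>\<^sub>k y\<^sub>k y\<^sub>k\<^sup>*\<close> collects the squared norms of all rows.\<close>

lemma sum_mult_adj_eq_zero:
  assumes "finite K" "\<And>k. k \<in> K \<Longrightarrow> y k \<in> M"
    and "(\<Sum>k\<in>K. op_mult (y k) (op_adj (y k))) = 0"
  shows "\<forall>k\<in>K. y k = 0"
proof (intro ballI ext)
  fix k \<sigma> \<rho> assume k: "k \<in> K"
  obtain U where U: "finite U" "\<forall>x\<in>y ` K. loc U x"
    using Mat_common_support[of "y ` K"] assms(1,2) by auto
  then have yU: "loc U (y k)" if "k \<in> K" for k
    using that by blast
  have "(\<Sum>k\<in>K. \<Sum>\<rho>\<in>fiber U \<sigma>. (cmod (y k \<sigma> \<rho>))\<^sup>2) = 0"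
    using fun_cong[OF fun_cong[OF assms(3)], of \<sigma> \<sigma>]
    by (simp add: op_sum_apply op_mult_adj_diagonal[OF yU] flip: of_real_sum)
  then have "(\<Sum>\<rho>\<in>fiber U \<sigma>. (cmod (y k \<sigma> \<rho>))\<^sup>2) = 0"
    using k assms(1) by (simp add: sum_nonneg sum_nonneg_eq_0_iff)
  then have "\<forall>\<rho>\<in>fiber U \<sigma>. y k \<sigma> \<rho> = 0"
    using finite_fiber[OF U(1)] by (simp add: sum_nonneg_eq_0_iff)
  moreover have "y k \<sigma> \<rho> = 0" if "\<rho> \<notin> fiber U \<sigma>"
    using that local_nonzeroD[OF yU[OF k], of \<sigma> \<rho>] unfolding fiber_def by fastforce
  ultimately show "y k \<sigma> \<rho> = (0::op) \<sigma> \<rho>"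
    by (cases "\<rho> \<in> fiber U \<sigma>") auto
qed

definition op_pow :: "op \<Rightarrow> nat \<Rightarrow> op" where
  "op_pow h n = (op_mult h ^^ n) one"

lemma op_pow_0 [simp]: "op_pow h 0 = one"
  and op_pow_Suc: "op_pow h (Suc n) = op_mult h (op_pow h n)"
  by (simp_all add: op_pow_def)

lemma local_op_pow: "loc U h \<Longrightarrow> loc U (op_pow h n)"
  by (induction n) (auto simp: op_pow_Suc intro: local_one local_mult dest: local_finite local_subset_sites)

lemma Mat_op_pow: "h \<in> M \<Longrightarrow> op_pow h n \<in> M"
  by (induction n) (auto simp: op_pow_Suc intro: Mat_one Mat_mult)

lemma op_pow_Suc_right: "h \<in> M \<Longrightarrow> op_mult (op_pow h n) h = op_pow h (Suc n)"
proof (induction n)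
  case 0
  then show ?case
    by (simp add: op_pow_Suc op_mult_one_left op_mult_one_right)
next
  case (Suc n)
  then show ?case
    by (simp add: op_pow_Suc op_mult_assoc Mat_op_pow)
qed

lemma op_pow_1: "h \<in> M \<Longrightarrow> op_pow h (Suc 0) = h"
  by (simp add: op_pow_Suc op_mult_one_right)

lemma selfadjoint_cancel:
  assumes hM: "h \<in> M" and hs: "op_adj h = h" and VM: "V \<in> M"
    and hhV: "op_mult h (op_mult h V) = 0"
  shows "op_mult h V = 0"
proof -
  let ?W = "op_mult h V"
  have "op_mult (op_adj ?W) (op_adj (op_adj ?W)) = op_mult (op_adj V) (op_mult h ?W)"
    using hs by (simp add: op_adj_mult op_mult_assoc[OF Mat_adj[OF VM] hM])
  then have "op_adj ?W = 0"
    using sum_mult_adj_eq_zero[of "{()}" "\<lambda>_. op_adj ?W"] Mat_adj Mat_mult[OF hM VM] hhV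
    by simp
  then show ?thesis
    using op_adj_adj[of ?W] by simp
qed

text \<open>Induction on the degree: if the lowest coefficient is nonzero, solve for \<open>h\<close>; otherwise
  the relation reads \<open>h (h V) = 0\<close>, hence \<open>h V = 0\<close> and the degree drops.\<close>

lemma annihilating_poly_imp_poly_unit:
  assumes hM: "h \<in> M" and hs: "op_adj h = h"
  shows "(\<Sum>j<N. op_scale (c j) (op_pow h (Suc j))) = 0 \<Longrightarrow> \<exists>j<N. c j \<noteq> 0 \<Longrightarrow>
    \<exists>(m::nat) d. op_mult (\<Sum>j<m. op_scale (d j) (op_pow h (Suc j))) h = h"
proof (induction N arbitrary: c)
  case (Suc N)
  define W where "W = (\<Sum>j<N. op_scale (c (Suc j)) (op_pow h (Suc j)))"
  define S where "S = (\<Sum>j<N. op_scale (c (Suc j)) (op_pow h (Suc (Suc j))))"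
  have rel: "op_scale (c 0) h + S = 0"
    using Suc.prems(1) unfolding S_def sum.lessThan_Suc_shift op_pow_1[OF hM] .
  show ?case
  proof (cases "c 0 = 0")
    case False
    have "op_mult (\<Sum>j<N. op_scale (- c (Suc j) / c 0) (op_pow h (Suc j))) h =
        op_scale (- 1 / c 0) (op_mult W h)"
      unfolding W_def op_mult_sum_left[OF hM] op_mult_scale_left[OF hM] op_scale_sum op_scale_scale
      by simp
    also have "op_mult W h = S"
      unfolding S_def W_def op_mult_sum_left[OF hM] op_mult_scale_left[OF hM] op_pow_Suc_right[OF hM] ..
    also have "S = op_scale (- c 0) h"
    proof (intro ext)
      fix \<sigma> \<tau>
      have "c 0 * h \<sigma> \<tau> + S \<sigma> \<tau> = 0"
        using fun_cong[OF fun_cong[OF rel], of \<sigma> \<tau>] by (simp add: op_scale_def)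
      then show "S \<sigma> \<tau> = op_scale (- c 0) h \<sigma> \<tau>"
        by (simp add: op_scale_def add_eq_0_iff)
    qed
    also have "op_scale (- 1 / c 0) (op_scale (- c 0) h) = h"
      using False by (simp add: op_scale_scale)
    finally show ?thesis
      by (intro exI)
  next
    case True
    define V where "V = (\<Sum>j<N. op_scale (c (Suc j)) (op_pow h j))"
    have VM: "V \<in> M"
      unfolding V_def by (intro Mat_sum Mat_scale Mat_op_pow[OF hM])
    have W_hV: "W = op_mult h V" and hW: "op_mult h W = 0"
      using rel True
      unfolding S_def W_def V_def op_mult_sum_right[OF hM] op_mult_scale_right[OF hM] op_pow_Suc
      by simp_all
    have "W = 0"
      using selfadjoint_cancel[OF hM hs VM] W_hV hW by simp
    then have "(\<Sum>j<N. op_scale ((c \<circ> Suc) j) (op_pow h (Suc j))) = 0"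
      unfolding W_def by simp
    moreover have "\<exists>j<N. (c \<circ> Suc) j \<noteq> 0"
      using Suc.prems(2) True by (metis comp_apply less_Suc_eq_0_disj)
    ultimately show ?thesis
      using Suc.IH by blast
  qed
qed simp

text \<open>The positive powers of \<open>h\<close>, restricted to the finitely many matrix entries on a
  support of \<open>h\<close>, are linearly dependent.\<close>

lemma selfadjoint_poly_unit:
  assumes hM: "h \<in> M" and hs: "op_adj h = h"
  shows "\<exists>(m::nat) d. op_mult (\<Sum>j<m. op_scale (d j) (op_pow h (Suc j))) h = h"
proof -
  obtain U where hU: "loc U h"
    using hM Mat_iff_local by blast
  let ?X = "confs_on U \<times> confs_on U"
  have "finite ?X"
    using finite_fiber[OF local_finite[OF hU]] by simp
  then obtain c where c: "\<exists>j\<in>{..<Suc (card ?X)}. c j \<noteq> 0"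
    "\<forall>x\<in>?X. (\<Sum>j\<in>{..<Suc (card ?X)}. c j * op_pow h (Suc j) (fst x) (snd x)) = 0"
    using exists_nontrivial_vanishing_combination[of ?X "{..<Suc (card ?X)}"
        "\<lambda>j x. op_pow h (Suc j) (fst x) (snd x)"]
    by auto
  define q where "q = (\<Sum>j<Suc (card ?X). op_scale (c j) (op_pow h (Suc j)))"
  have qU: "loc U q"
    unfolding q_def
    by (intro local_sum local_scale local_op_pow hU local_finite[OF hU] local_subset_sites[OF hU])
  have "q \<alpha> \<beta> = 0" if "\<alpha> \<in> confs_on U" "\<beta> \<in> confs_on U" for \<alpha> \<beta>
    using c(2) that by (simp add: q_def op_sum_apply op_scale_def)
  then have "q = 0"
    by (subst mat_unit_expansion[OF qU]) simp
  then show ?thesis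
    using annihilating_poly_imp_poly_unit[OF hM hs] c(1) unfolding q_def by blast
qed

lemma op_one_nonzero: "one \<noteq> 0"
proof
  assume "one = 0"
  then have "one (\<lambda>_. 0) (\<lambda>_. 0) = 0"
    by simp
  then show False
    using zero_in_Conf by (simp add: op_one_def)
qed

lemma eliminate_dependent_factor:
  assumes K: "finite K" "j \<in> K" and "\<nu> j \<noteq> 0"
    and gc: "\<And>k. k \<in> K \<Longrightarrow> g k \<in> M \<and> c k \<in> M"
    and rel: "op_scale \<mu> one + (\<Sum>k\<in>K. op_scale (\<nu> k) (c k)) = 0"
  shows "(\<Sum>k\<in>K. op_mult (g k) (c k)) + op_scale (\<mu> / \<nu> j) (g j) =
    (\<Sum>k\<in>K - {j}. op_mult (g k - op_scale (\<nu> k / \<nu> j) (g j)) (c k))"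
proof -
  define T where "T = (\<Sum>k\<in>K - {j}. op_scale (\<nu> k) (c k))"
  have gjM: "g j \<in> M"
    using gc K(2) by blast
  have cj: "c j = op_scale (-1 / \<nu> j) (op_scale \<mu> one + T)"
  proof (intro ext)
    fix \<sigma> \<tau>
    have "\<mu> * one \<sigma> \<tau> + (\<nu> j * c j \<sigma> \<tau> + T \<sigma> \<tau>) = 0"
      using fun_cong[OF fun_cong[OF rel], of \<sigma> \<tau>] sum.remove[OF K, of "\<lambda>k. op_scale (\<nu> k) (c k)"]
      by (simp add: T_def op_scale_def)
    then show "c j \<sigma> \<tau> = op_scale (-1 / \<nu> j) (op_scale \<mu> one + T) \<sigma> \<tau>"
      using \<open>\<nu> j \<noteq> 0\<close> by (simp add: op_scale_def field_simps add_eq_0_iff)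
  qed
  have gcj: "op_mult (g j) (c j) =
      op_scale (-1 / \<nu> j) (op_scale \<mu> (g j) + (\<Sum>k\<in>K - {j}. op_scale (\<nu> k) (op_mult (g j) (c k))))"
    unfolding cj T_def op_mult_scale_right[OF gjM] op_mult_add_right[OF gjM] op_mult_one_right[OF gjM]
      op_mult_sum_right[OF gjM]
    by (simp add: op_mult_scale_right[OF gjM])
  have "(\<Sum>k\<in>K. op_mult (g k) (c k)) + op_scale (\<mu> / \<nu> j) (g j) =
      op_mult (g j) (c j) + (\<Sum>k\<in>K - {j}. op_mult (g k) (c k)) + op_scale (\<mu> / \<nu> j) (g j)"
    unfolding sum.remove[OF K] ..
  also have "\<dots> = (\<Sum>k\<in>K - {j}. op_mult (g k) (c k) - op_scale (\<nu> k / \<nu> j) (op_mult (g j) (c k)))"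
    unfolding gcj using \<open>\<nu> j \<noteq> 0\<close>
    by (intro ext) (simp add: op_sum_apply op_scale_def sum_subtractf sum_distrib_left field_simps)
  also have "\<dots> = (\<Sum>k\<in>K - {j}. op_mult (g k - op_scale (\<nu> k / \<nu> j) (g j)) (c k))"
    using gc by (intro sum.cong refl) (simp add: op_mult_diff_left op_mult_scale_left)
  finally show ?thesis .
qed

lemma op_independent_one_extension:
  assumes K: "finite K"
    and no_rel: "\<not> (\<exists>\<mu> \<nu>. op_scale \<mu> one + (\<Sum>k\<in>K. op_scale (\<nu> k) (c k)) = 0 \<and> (\<exists>j\<in>K. \<nu> j \<noteq> 0))"
  shows "op_independent (insert None (Some ` K)) (case_option one c)"
  unfolding op_independent_def
proof (intro allI impI)
  fix \<nu> assume "(\<Sum>q\<in>insert None (Some ` K). op_scale (\<nu> q) (case_option one c q)) = 0"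
  then have rel: "op_scale (\<nu> None) one + (\<Sum>k\<in>K. op_scale (\<nu> (Some k)) (c k)) = 0"
    by (simp add: sum_insert_None_image_Some[OF K])
  then have "\<forall>k\<in>K. \<nu> (Some k) = 0"
    using no_rel[unfolded not_ex, THEN spec[of _ "\<nu> None"], THEN spec[of _ "\<lambda>k. \<nu> (Some k)"]]
    by blast
  then have "op_scale (\<nu> None) one = 0"
    using rel by simp
  then have "\<nu> None = 0"
    using op_one_nonzero by (auto simp: op_scale_def fun_eq_iff)
  with \<open>\<forall>k\<in>K. \<nu> (Some k) = 0\<close> show "\<forall>q\<in>insert None (Some ` K). \<nu> q = 0"
    by auto
qed

lemma scalar_relation_not_independent:
  assumes K: "finite K" "j \<notin> K" and indep: "op_independent (insert j K) b"
    and bM: "\<forall>k\<in>insert j K. b k \<in> M" and h: "\<forall>k\<in>K. \<exists>\<mu>. h k = op_scale \<mu> one"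
    and rel: "b j + (\<Sum>k\<in>K. op_mult (h k) (b k)) = 0"
  shows False
proof -
  obtain \<mu> where \<mu>: "\<And>k. k \<in> K \<Longrightarrow> h k = op_scale (\<mu> k) one"
    using bchoice[OF h] by blast
  have "(\<Sum>k\<in>K. op_scale ((\<mu>(j := 1)) k) (b k)) = (\<Sum>k\<in>K. op_mult (h k) (b k))"
  proof (rule sum.cong[OF refl])
    fix k assume k: "k \<in> K"
    then have "op_mult (h k) (b k) = op_scale (\<mu> k) (b k)"
      unfolding \<mu>[OF k] using bM op_scale_eq_mult[symmetric] by simp
    then show "op_scale ((\<mu>(j := 1)) k) (b k) = op_mult (h k) (b k)"
      using K(2) k by auto
  qed
  then have "(\<Sum>k\<in>insert j K. op_scale ((\<mu>(j := 1)) k) (b k)) = b j + (\<Sum>k\<in>K. op_mult (h k) (b k))"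
    by (simp only: sum.insert[OF K] fun_upd_same op_scale_one)
  then have "(\<mu>(j := 1)) j = 0"
    using indep[unfolded op_independent_def, THEN spec[of _ "\<mu>(j := 1)"]] rel by simp
  then show False
    by simp
qed

end

section \<open>Invertible subalgebras\<close>

locale invertible_subalgebra = lattice_system +
  fixes A :: "op set"
  assumes invertible: "invertible_subalg D p A"
begin

abbreviation "A' \<equiv> commutant D p A"

lemma unital_star_subalg: "unital_star_subalg D p A"
  using invertible by (simp add: invertible_subalg_def)

lemma A_Mat: "a \<in> A \<Longrightarrow> a \<in> M"
  and one_in_A: "one \<in> A"
  and A_add: "a \<in> A \<Longrightarrow> b \<in> A \<Longrightarrow> a + b \<in> A"
  and A_mult: "a \<in> A \<Longrightarrow> b \<in> A \<Longrightarrow> op_mult a b \<in> A"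
  and A_scale: "a \<in> A \<Longrightarrow> op_scale c a \<in> A"
  and A_adj: "a \<in> A \<Longrightarrow> op_adj a \<in> A"
  using unital_star_subalg by (auto simp: unital_star_subalg_def)

lemma zero_in_A: "0 \<in> A"
  using A_scale[OF one_in_A, of 0] by simp

lemma A_diff: "a \<in> A \<Longrightarrow> b \<in> A \<Longrightarrow> a - b \<in> A"
  using A_add[of a "op_scale (-1) b"] A_scale[of b "-1"] by (simp add: op_scale_minus_one)

lemma commutant_Mat: "b \<in> A' \<Longrightarrow> b \<in> M"
  and commutant_commute: "a \<in> A \<Longrightarrow> b \<in> A' \<Longrightarrow> op_mult a b = op_mult b a"
  by (simp_all add: commutant_def)

lemma one_in_commutant: "one \<in> A'"
  using Mat_one A_Mat by (auto simp: commutant_def op_mult_one_left op_mult_one_right)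

lemma commutant_scale: "b \<in> A' \<Longrightarrow> op_scale c b \<in> A'"
  using A_Mat by (auto simp: commutant_def Mat_scale op_mult_scale_left op_mult_scale_right)

lemma commutant_mult:
  assumes "b \<in> A'" "c \<in> A'"
  shows "op_mult b c \<in> A'"
proof -
  have M: "b \<in> M" "c \<in> M"
    using assms commutant_Mat by auto
  have "op_mult a (op_mult b c) = op_mult (op_mult b c) a" if a: "a \<in> A" for a
  proof -
    have aM: "a \<in> M"
      using A_Mat[OF a] .
    have "op_mult a (op_mult b c) = op_mult (op_mult a b) c"
      by (simp only: op_mult_assoc[OF aM M(1)])
    also have "\<dots> = op_mult b (op_mult a c)"
      by (simp only: commutant_commute[OF a assms(1)] op_mult_assoc[OF M(1) aM])
    also have "\<dots> = op_mult (op_mult b c) a"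
      by (simp only: commutant_commute[OF a assms(2)] op_mult_assoc[OF M])
    finally show ?thesis .
  qed
  then show ?thesis
    using Mat_mult[OF M] by (simp add: commutant_def)
qed

lemma Mat_decompose:
  assumes "x \<in> M"
  obtains n a b where "\<forall>i<n. a i \<in> A \<and> b i \<in> A'" "x = (\<Sum>i<(n::nat). op_mult (a i) (b i))"
proof -
  obtain l where "\<forall>x\<in>M. \<exists>(n::nat) a b. (\<forall>i<n. a i \<in> A \<and> b i \<in> A' \<and>
      Supp D p (a i) \<subseteq> thicken D (Supp D p x) l \<and> Supp D p (b i) \<subseteq> thicken D (Supp D p x) l) \<and>
      x = (\<Sum>i<n. op_mult (a i) (b i))"
    using invertible unfolding invertible_subalg_def by blast
  then obtain n a b where "\<forall>i<(n::nat). a i \<in> A \<and> b i \<in> A'" "x = (\<Sum>i<n. op_mult (a i) (b i))"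
    using assms by blast
  then show thesis
    using that by blast
qed

lemma central_commutes_Mat:
  assumes zA: "z \<in> A" and z_comm: "\<forall>y\<in>A. op_mult z y = op_mult y z" and x: "x \<in> M"
  shows "op_mult x z = op_mult z x"
proof -
  have zM: "z \<in> M"
    using A_Mat[OF zA] .
  obtain n :: nat and a b where ab: "\<forall>i<n. a i \<in> A \<and> b i \<in> A'"
    and x_eq: "x = (\<Sum>i<n. op_mult (a i) (b i))"
    by (rule Mat_decompose[OF x])
  have "op_mult z (op_mult (a i) (b i)) = op_mult (op_mult (a i) (b i)) z" if "i < n" for i
  proof -
    have a: "a i \<in> A" "a i \<in> M" and b: "b i \<in> A'" "b i \<in> M"
      using ab that A_Mat commutant_Mat by auto
    have "op_mult z (op_mult (a i) (b i)) = op_mult (op_mult z (a i)) (b i)"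
      using op_mult_assoc[OF zM a(2)] by (rule sym)
    also have "\<dots> = op_mult (a i) (op_mult z (b i))"
      using z_comm a(1) op_mult_assoc[OF a(2) zM] by simp
    also have "\<dots> = op_mult (op_mult (a i) (b i)) z"
      using commutant_commute[OF zA b(1)] op_mult_assoc[OF a(2) b(2)] by simp
    finally show ?thesis .
  qed
  then show ?thesis
    unfolding x_eq op_mult_sum_left[OF zM] op_mult_sum_right[OF zM]
    by (intro sum.cong refl) simp
qed

lemma central: "central_subalg D p A"
  unfolding central_subalg_def
  using Mat_center_scalar A_Mat central_commutes_Mat by blast

lemma central_scalar: "z \<in> A \<Longrightarrow> \<forall>y\<in>A. op_mult z y = op_mult y z \<Longrightarrow> \<exists>c. z = op_scale c one"
  using central unfolding central_subalg_def by blast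

subsection \<open>Simplicity\<close>

definition prod_span :: "op set \<Rightarrow> op set" where
  "prod_span I = {x. \<exists>xs. set xs \<subseteq> I \<times> A' \<and> x = sum_list (map (case_prod op_mult) xs)}"

lemma prod_span_zero: "0 \<in> prod_span I"
  unfolding prod_span_def by (intro CollectI exI[of _ "[]"]) simp

lemma prod_span_add:
  assumes "x \<in> prod_span I" "y \<in> prod_span I"
  shows "x + y \<in> prod_span I"
proof -
  obtain xs ys where "set xs \<subseteq> I \<times> A'" "x = sum_list (map (case_prod op_mult) xs)"
    "set ys \<subseteq> I \<times> A'" "y = sum_list (map (case_prod op_mult) ys)"
    using assms unfolding prod_span_def by blast
  then show ?thesis
    unfolding prod_span_def by (intro CollectI exI[of _ "xs @ ys"]) auto
qed

lemma prod_span_base: "i \<in> I \<Longrightarrow> b \<in> A' \<Longrightarrow> op_mult i b \<in> prod_span I"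
  unfolding prod_span_def by (intro CollectI exI[of _ "[(i, b)]"]) simp

lemma prod_span_sum: "(\<And>k. k \<in> K \<Longrightarrow> f k \<in> prod_span I) \<Longrightarrow> (\<Sum>k\<in>K. f k) \<in> prod_span I"
  by (induction K rule: infinite_finite_induct) (auto intro: prod_span_zero prod_span_add)

lemma prod_span_Mat:
  assumes "I \<subseteq> A" "s \<in> prod_span I"
  shows "s \<in> M"
proof -
  have "Mat D p \<supseteq> set (map (case_prod op_mult) xs)" if "set xs \<subseteq> I \<times> A'" for xs
    using that assms(1) by (force intro: Mat_mult A_Mat commutant_Mat)
  moreover have "sum_list xs \<in> M" if "set xs \<subseteq> M" for xs
    using that by (induction xs) (auto intro: Mat_zero Mat_add)
  ultimately show ?thesis
    using assms(2) unfolding prod_span_def by blast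
qed

lemma prod_span_additive_image:
  assumes additive: "\<And>x y. f (x + y) = f x + f y" "f 0 = 0"
    and base: "\<And>i b. i \<in> I \<Longrightarrow> b \<in> A' \<Longrightarrow> f (op_mult i b) \<in> prod_span J"
    and s: "s \<in> prod_span I"
  shows "f s \<in> prod_span J"
proof -
  obtain xs where "set xs \<subseteq> I \<times> A'" "s = sum_list (map (case_prod op_mult) xs)"
    using s unfolding prod_span_def by blast
  then show ?thesis
    by (induction xs arbitrary: s) (auto simp: additive intro!: prod_span_zero prod_span_add base)
qed

lemma prod_span_scale:
  assumes "I \<subseteq> A" "s \<in> prod_span I"
  shows "op_scale c s \<in> prod_span I"
proof (rule prod_span_additive_image[OF _ _ _ assms(2)])
  fix i b assume "i \<in> I" "b \<in> A'"
  then have "op_scale c (op_mult i b) = op_mult i (op_scale c b)"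
    using assms(1) A_Mat op_mult_scale_right by auto
  then show "op_scale c (op_mult i b) \<in> prod_span I"
    using \<open>i \<in> I\<close> \<open>b \<in> A'\<close> by (simp add: prod_span_base commutant_scale)
qed (simp_all add: op_scale_def fun_eq_iff distrib_left)

lemma prod_span_mult_left_A:
  assumes "I \<subseteq> A" "a \<in> A" "\<And>i. i \<in> I \<Longrightarrow> op_mult a i \<in> I" "s \<in> prod_span I"
  shows "op_mult a s \<in> prod_span I"
proof (rule prod_span_additive_image[OF _ _ _ assms(4)])
  fix i b assume "i \<in> I" "b \<in> A'"
  then have "op_mult a (op_mult i b) = op_mult (op_mult a i) b"
    using assms(1,2) A_Mat op_mult_assoc by auto
  then show "op_mult a (op_mult i b) \<in> prod_span I"
    using \<open>i \<in> I\<close> \<open>b \<in> A'\<close> assms(3) by (simp add: prod_span_base)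
qed (simp_all only: op_mult_add_right[OF A_Mat[OF assms(2)]] op_mult_zero_right)

lemma prod_span_mult_left_commutant:
  assumes "I \<subseteq> A" "b \<in> A'" "s \<in> prod_span I"
  shows "op_mult b s \<in> prod_span I"
proof (rule prod_span_additive_image[OF _ _ _ assms(3)])
  fix i c assume i: "i \<in> I" and c: "c \<in> A'"
  have M: "i \<in> M" "b \<in> M"
    using i assms(1,2) A_Mat commutant_Mat by auto
  have "op_mult b (op_mult i c) = op_mult (op_mult i b) c"
    using commutant_commute[of i b] i assms(1,2) op_mult_assoc[OF M(2,1)] by auto
  also have "\<dots> = op_mult i (op_mult b c)"
    using op_mult_assoc[OF M] .
  finally show "op_mult b (op_mult i c) \<in> prod_span I"
    using i c assms(2) by (simp add: prod_span_base commutant_mult)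
qed (simp_all only: op_mult_add_right[OF commutant_Mat[OF assms(2)]] op_mult_zero_right)

lemma prod_span_mult_right_A:
  assumes "I \<subseteq> A" "a \<in> A" "\<And>i. i \<in> I \<Longrightarrow> op_mult i a \<in> I" "s \<in> prod_span I"
  shows "op_mult s a \<in> prod_span I"
proof (rule prod_span_additive_image[OF _ _ _ assms(4)])
  fix i c assume i: "i \<in> I" and c: "c \<in> A'"
  have M: "i \<in> M" "c \<in> M"
    using i c assms(1) A_Mat commutant_Mat by auto
  have "op_mult (op_mult i c) a = op_mult i (op_mult a c)"
    using commutant_commute[OF assms(2) c] op_mult_assoc[OF M] by simp
  also have "\<dots> = op_mult (op_mult i a) c"
    using op_mult_assoc[OF M(1) A_Mat[OF assms(2)]] by simp
  finally show "op_mult (op_mult i c) a \<in> prod_span I"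
    using i c assms(3) by (simp add: prod_span_base)
qed (simp_all only: op_mult_add_left[OF A_Mat[OF assms(2)]] op_mult_zero_left)

lemma prod_span_mult_right_commutant:
  assumes "I \<subseteq> A" "b \<in> A'" "s \<in> prod_span I"
  shows "op_mult s b \<in> prod_span I"
proof (rule prod_span_additive_image[OF _ _ _ assms(3)])
  fix i c assume i: "i \<in> I" and c: "c \<in> A'"
  have "op_mult (op_mult i c) b = op_mult i (op_mult c b)"
    using i c assms(1) A_Mat commutant_Mat op_mult_assoc by auto
  then show "op_mult (op_mult i c) b \<in> prod_span I"
    using i c assms(2) by (simp add: prod_span_base commutant_mult)
qed (simp_all only: op_mult_add_left[OF commutant_Mat[OF assms(2)]] op_mult_zero_left)

lemma ideal_subset: "two_sided_ideal A I \<Longrightarrow> I \<subseteq> A"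
  and ideal_zero: "two_sided_ideal A I \<Longrightarrow> 0 \<in> I"
  and ideal_diff: "two_sided_ideal A I \<Longrightarrow> x \<in> I \<Longrightarrow> y \<in> I \<Longrightarrow> x - y \<in> I"
  and ideal_mult_left: "two_sided_ideal A I \<Longrightarrow> a \<in> A \<Longrightarrow> x \<in> I \<Longrightarrow> op_mult a x \<in> I"
  and ideal_mult_right: "two_sided_ideal A I \<Longrightarrow> a \<in> A \<Longrightarrow> x \<in> I \<Longrightarrow> op_mult x a \<in> I"
  by (simp_all add: two_sided_ideal_def)

lemma ideal_add: "two_sided_ideal A I \<Longrightarrow> x \<in> I \<Longrightarrow> y \<in> I \<Longrightarrow> x + y \<in> I"
  using ideal_diff[of I x "0 - y"] ideal_diff[of I 0 y] ideal_zero[of I] by simp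

lemma ideal_sum: "two_sided_ideal A I \<Longrightarrow> (\<And>k. k \<in> K \<Longrightarrow> f k \<in> I) \<Longrightarrow> (\<Sum>k\<in>K. f k) \<in> I"
  by (induction K rule: infinite_finite_induct) (auto intro: ideal_zero ideal_add)

lemma ideal_scale: "two_sided_ideal A I \<Longrightarrow> x \<in> I \<Longrightarrow> op_scale c x \<in> I"
proof -
  assume I: "two_sided_ideal A I" and x: "x \<in> I"
  then have "op_scale c x = op_mult (op_scale c one) x"
    using op_scale_eq_mult ideal_subset A_Mat by blast
  then show ?thesis
    using ideal_mult_left[OF I A_scale[OF one_in_A] x] by simp
qed

lemma A_op_pow: "h \<in> A \<Longrightarrow> op_pow h n \<in> A"
  by (induction n) (auto simp: op_pow_Suc intro: one_in_A A_mult)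

lemma prod_span_ideal_mult_left:
  assumes I: "two_sided_ideal A I" and x: "x \<in> M" and s: "s \<in> prod_span I"
  shows "op_mult x s \<in> prod_span I"
proof -
  obtain n :: nat and a b where ab: "\<forall>k<n. a k \<in> A \<and> b k \<in> A'"
    and x_eq: "x = (\<Sum>k<n. op_mult (a k) (b k))"
    by (rule Mat_decompose[OF x])
  have sM: "s \<in> M"
    using prod_span_Mat[OF ideal_subset[OF I] s] .
  have "op_mult (op_mult (a k) (b k)) s \<in> prod_span I" if "k < n" for k
  proof -
    have a: "a k \<in> A" and b: "b k \<in> A'"
      using ab that by auto
    have "op_mult (a k) (op_mult (b k) s) \<in> prod_span I"
      using ideal_subset[OF I] a ideal_mult_left[OF I a]
        prod_span_mult_left_commutant[OF ideal_subset[OF I] b s]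
      by (rule prod_span_mult_left_A)
    then show ?thesis
      by (simp add: op_mult_assoc A_Mat[OF a] commutant_Mat[OF b])
  qed
  then show ?thesis
    unfolding x_eq op_mult_sum_left[OF sM] by (auto intro: prod_span_sum)
qed

lemma prod_span_ideal_mult_right:
  assumes I: "two_sided_ideal A I" and x: "x \<in> M" and s: "s \<in> prod_span I"
  shows "op_mult s x \<in> prod_span I"
proof -
  obtain n :: nat and a b where ab: "\<forall>k<n. a k \<in> A \<and> b k \<in> A'"
    and x_eq: "x = (\<Sum>k<n. op_mult (a k) (b k))"
    by (rule Mat_decompose[OF x])
  have sM: "s \<in> M"
    using prod_span_Mat[OF ideal_subset[OF I] s] .
  have "op_mult s (op_mult (a k) (b k)) \<in> prod_span I" if "k < n" for k
  proof -
    have a: "a k \<in> A" and b: "b k \<in> A'"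
      using ab that by auto
    have "op_mult (op_mult s (a k)) (b k) \<in> prod_span I"
      using ideal_subset[OF I] b
        prod_span_mult_right_A[OF ideal_subset[OF I] a ideal_mult_right[OF I a] s]
      by (rule prod_span_mult_right_commutant)
    then show ?thesis
      by (simp add: op_mult_assoc sM A_Mat[OF a])
  qed
  then show ?thesis
    unfolding x_eq op_mult_sum_right[OF sM] by (auto intro: prod_span_sum)
qed

text \<open>Sandwiching \<open>w\<close> between matrix units produces a nonzero multiple of the identity.\<close>

lemma one_in_prod_span_ideal:
  assumes I: "two_sided_ideal A I" and w: "w \<in> I" "w \<noteq> 0"
  shows "one \<in> prod_span I"
proof -
  have wM: "w \<in> M"
    using w(1) ideal_subset[OF I] A_Mat by blast
  obtain U \<alpha> \<beta> c where U: "finite U" "U \<subseteq> sites D" and "c \<noteq> 0"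
    and sandwich: "(\<Sum>\<gamma>\<in>confs_on U. op_mult (op_mult (mat_unit U \<gamma> \<alpha>) w) (mat_unit U \<beta> \<gamma>)) = op_scale c one"
    by (rule nonzero_sandwich_scalar[OF wM w(2)])
  have "w \<in> prod_span I"
    using prod_span_base[OF w(1) one_in_commutant] op_mult_one_right[OF wM] by simp
  then have "op_mult (mat_unit U \<gamma> \<alpha>) w \<in> prod_span I" for \<gamma>
    by (rule prod_span_ideal_mult_left[OF I Mat_mat_unit[OF U]])
  then have "op_mult (op_mult (mat_unit U \<gamma> \<alpha>) w) (mat_unit U \<beta> \<gamma>) \<in> prod_span I" for \<gamma>
    by (rule prod_span_ideal_mult_right[OF I Mat_mat_unit[OF U]])
  then have "op_scale c one \<in> prod_span I"
    unfolding sandwich[symmetric] by (intro prod_span_sum)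
  then have "op_scale (1 / c) (op_scale c one) \<in> prod_span I"
    by (rule prod_span_scale[OF ideal_subset[OF I]])
  then show ?thesis
    using \<open>c \<noteq> 0\<close> by (simp add: op_scale_scale)
qed

text \<open>With \<open>h = \<Sum>\<^sub>i i i\<^sup>*\<close> and \<open>q\<close> a polynomial unit for \<open>h\<close>, \<open>r = 1 - q\<close> satisfies
  \<open>\<Sum>\<^sub>i (r i)(r i)\<^sup>* = r h r\<^sup>* = 0\<close>, hence \<open>r i = 0\<close> for all \<open>i\<close>.\<close>

lemma ideal_left_unit:
  assumes I: "two_sided_ideal A I" and F: "finite F" "F \<subseteq> I"
  shows "\<exists>q\<in>I. \<forall>i\<in>F. op_mult q i = i"
proof -
  have FA: "i \<in> A" "i \<in> M" if "i \<in> F" for i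
    using that F(2) ideal_subset[OF I] A_Mat by auto
  define h where "h = (\<Sum>i\<in>F. op_mult i (op_adj i))"
  have hI: "h \<in> I"
    unfolding h_def using F(2) by (intro ideal_sum[OF I] ideal_mult_right[OF I] A_adj FA) auto
  then have hA: "h \<in> A" and hM: "h \<in> M"
    using ideal_subset[OF I] A_Mat by auto
  have "op_adj h = h"
    unfolding h_def op_adj_sum op_adj_mult by simp
  then obtain m :: nat and d where qh: "op_mult (\<Sum>j<m. op_scale (d j) (op_pow h (Suc j))) h = h"
    using selfadjoint_poly_unit[OF hM] by blast
  define q where "q = (\<Sum>j<m. op_scale (d j) (op_pow h (Suc j)))"
  have qI: "q \<in> I"
    unfolding q_def op_pow_Suc
    by (intro ideal_sum[OF I] ideal_scale[OF I] ideal_mult_right[OF I A_op_pow[OF hA] hI])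
  then have qM: "q \<in> M"
    using ideal_subset[OF I] A_Mat by auto
  define r where "r = one - q"
  have rM: "r \<in> M"
    unfolding r_def using Mat_diff[OF Mat_one qM] .
  have rh: "op_mult r h = 0"
    unfolding r_def op_mult_diff_left[OF hM] op_mult_one_left[OF hM] using qh q_def by simp
  have "op_mult (op_mult r i) (op_adj (op_mult r i)) =
      op_mult r (op_mult (op_mult i (op_adj i)) (op_adj r))" if "i \<in> F" for i
    using FA[OF that] rM Mat_adj Mat_mult by (simp add: op_adj_mult op_mult_assoc)
  then have "(\<Sum>i\<in>F. op_mult (op_mult r i) (op_adj (op_mult r i))) =
      (\<Sum>i\<in>F. op_mult r (op_mult (op_mult i (op_adj i)) (op_adj r)))"
    by (rule sum.cong[OF refl])
  also have "\<dots> = op_mult r (op_mult h (op_adj r))"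
    unfolding h_def op_mult_sum_left[OF Mat_adj[OF rM]] op_mult_sum_right[OF rM] ..
  also have "\<dots> = 0"
    using rh op_mult_assoc[OF rM hM] by simp
  finally have "(\<Sum>i\<in>F. op_mult (op_mult r i) (op_adj (op_mult r i))) = 0" .
  then have "\<forall>i\<in>F. op_mult r i = 0"
    using sum_mult_adj_eq_zero[OF F(1), of "op_mult r"] rM FA Mat_mult by blast
  then have "\<forall>i\<in>F. op_mult q i = i"
    unfolding r_def using FA op_mult_diff_left op_mult_one_left by simp
  with qI show ?thesis
    by blast
qed

lemma one_in_nonzero_ideal:
  assumes I: "two_sided_ideal A I" and w: "w \<in> I" "w \<noteq> 0"
  shows "one \<in> I"
proof -
  obtain xs where xs: "set xs \<subseteq> I \<times> A'" and one_eq: "one = sum_list (map (case_prod op_mult) xs)"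
    using one_in_prod_span_ideal[OF assms] unfolding prod_span_def by blast
  have "fst ` set xs \<subseteq> I"
    using xs by auto
  then obtain q where qI: "q \<in> I" and q_unit: "\<forall>i\<in>fst ` set xs. op_mult q i = i"
    using ideal_left_unit[OF I] by blast
  have qM: "q \<in> M"
    using qI ideal_subset[OF I] A_Mat by auto
  have "q = op_mult q one"
    using op_mult_one_right[OF qM] by simp
  also have "\<dots> = sum_list (map (\<lambda>(i, b). op_mult (op_mult q i) b) xs)"
    unfolding one_eq op_mult_sum_list_right[OF qM] map_map
    using xs qM ideal_subset[OF I] A_Mat by (intro arg_cong[where f = sum_list] map_cong) (auto simp: op_mult_assoc)
  also have "\<dots> = one"
    unfolding one_eq using q_unit by (intro arg_cong[where f = sum_list] map_cong) force+
  finally show ?thesis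
    using qI by simp
qed

lemma simple: "simple_subalg A"
  unfolding simple_subalg_def
proof (intro allI impI)
  fix I assume I: "two_sided_ideal A I"
  show "I = {0} \<or> I = A"
  proof (cases "I = {0}")
    case False
    then obtain w where "w \<in> I" "w \<noteq> 0"
      using ideal_zero[OF I] by blast
    then have "one \<in> I"
      by (rule one_in_nonzero_ideal[OF I])
    then have "op_mult a one \<in> I" if "a \<in> A" for a
      using ideal_mult_left[OF I that] by blast
    then have "a \<in> I" if "a \<in> A" for a
      using that op_mult_one_right[OF A_Mat[OF that]] by metis
    then show ?thesis
      using ideal_subset[OF I] by blast
  qed simp
qed

subsection \<open>Local generation\<close>

lemma commutant_swap:
  assumes "y \<in> M" "a \<in> A" "b \<in> A'"
  shows "op_mult (op_mult y a) b = op_mult (op_mult y b) a"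
proof -
  have "op_mult (op_mult y a) b = op_mult y (op_mult b a)"
    using op_mult_assoc[OF assms(1) A_Mat[OF assms(2)]] commutant_commute[OF assms(2,3)] by simp
  also have "\<dots> = op_mult (op_mult y b) a"
    using op_mult_assoc[OF assms(1) commutant_Mat[OF assms(3)]] by simp
  finally show ?thesis .
qed

definition relation_coeffs :: "'i set \<Rightarrow> ('i \<Rightarrow> op) \<Rightarrow> op \<Rightarrow> op set" where
  "relation_coeffs K b b0 =
    {c \<in> A. \<exists>h. (\<forall>k\<in>K. h k \<in> A) \<and> op_mult c b0 + (\<Sum>k\<in>K. op_mult (h k) (b k)) = 0}"

lemma relation_coeffs_ideal:
  assumes b0: "b0 \<in> A'" and b: "\<forall>k\<in>K. b k \<in> A'"
  shows "two_sided_ideal A (relation_coeffs K b b0)"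
  unfolding two_sided_ideal_def
proof (intro conjI ballI)
  show "relation_coeffs K b b0 \<subseteq> A"
    unfolding relation_coeffs_def by blast
  show "0 \<in> relation_coeffs K b b0"
    unfolding relation_coeffs_def using zero_in_A by (intro CollectI conjI exI[of _ "\<lambda>_. 0"]) auto
next
  fix x y assume "x \<in> relation_coeffs K b b0" "y \<in> relation_coeffs K b b0"
  then obtain hx hy where x: "x \<in> A" "\<forall>k\<in>K. hx k \<in> A" "op_mult x b0 + (\<Sum>k\<in>K. op_mult (hx k) (b k)) = 0"
    and y: "y \<in> A" "\<forall>k\<in>K. hy k \<in> A" "op_mult y b0 + (\<Sum>k\<in>K. op_mult (hy k) (b k)) = 0"
    unfolding relation_coeffs_def by blast
  have bM: "b0 \<in> M" "k \<in> K \<Longrightarrow> b k \<in> M" for k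
    using b0 b commutant_Mat by auto
  have "op_mult (x - y) b0 + (\<Sum>k\<in>K. op_mult (hx k - hy k) (b k)) =
      (op_mult x b0 + (\<Sum>k\<in>K. op_mult (hx k) (b k))) - (op_mult y b0 + (\<Sum>k\<in>K. op_mult (hy k) (b k)))"
    using bM by (simp add: op_mult_diff_left sum_subtractf)
  then show "x - y \<in> relation_coeffs K b b0"
    unfolding relation_coeffs_def using x y A_diff
    by (intro CollectI conjI exI[of _ "\<lambda>k. hx k - hy k"]) auto
next
  fix a x assume a: "a \<in> A" and "x \<in> relation_coeffs K b b0"
  then obtain hx where x: "x \<in> A" "\<forall>k\<in>K. hx k \<in> A" "op_mult x b0 + (\<Sum>k\<in>K. op_mult (hx k) (b k)) = 0"
    unfolding relation_coeffs_def by blast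
  have aM: "a \<in> M" and xM: "x \<in> M" and hM: "k \<in> K \<Longrightarrow> hx k \<in> M" for k
    using a x A_Mat by auto
  have "op_mult (op_mult a x) b0 + (\<Sum>k\<in>K. op_mult (op_mult a (hx k)) (b k)) =
      op_mult a (op_mult x b0 + (\<Sum>k\<in>K. op_mult (hx k) (b k)))"
    unfolding op_mult_add_right[OF aM] op_mult_sum_right[OF aM] op_mult_assoc[OF aM xM]
    using op_mult_assoc[OF aM hM] by simp
  then show "op_mult a x \<in> relation_coeffs K b b0"
    unfolding relation_coeffs_def using x a A_mult
    by (intro CollectI conjI exI[of _ "\<lambda>k. op_mult a (hx k)"]) auto
  have "op_mult (op_mult x a) b0 + (\<Sum>k\<in>K. op_mult (op_mult (hx k) a) (b k)) =
      op_mult (op_mult x b0 + (\<Sum>k\<in>K. op_mult (hx k) (b k))) a"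
    unfolding op_mult_add_left[OF aM] op_mult_sum_left[OF aM] commutant_swap[OF xM a b0]
    using commutant_swap[OF hM a] b by simp
  then show "op_mult x a \<in> relation_coeffs K b b0"
    unfolding relation_coeffs_def using x a A_mult
    by (intro CollectI conjI exI[of _ "\<lambda>k. op_mult (hx k) a"]) auto
qed

lemma relation_commutators:
  assumes b0: "b0 \<in> A'" and bh: "\<forall>k\<in>K. b k \<in> A' \<and> h k \<in> A"
    and rel: "b0 + (\<Sum>k\<in>K. op_mult (h k) (b k)) = 0" and d: "d \<in> A"
  shows "(\<Sum>k\<in>K. op_mult (op_mult d (h k) - op_mult (h k) d) (b k)) = 0"
proof -
  have dM: "d \<in> M" and hM: "k \<in> K \<Longrightarrow> h k \<in> M" and bM: "k \<in> K \<Longrightarrow> b k \<in> M" for k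
    using d bh A_Mat commutant_Mat by auto
  have "op_mult d (b0 + (\<Sum>k\<in>K. op_mult (h k) (b k))) =
      op_mult d b0 + (\<Sum>k\<in>K. op_mult (op_mult d (h k)) (b k))"
    unfolding op_mult_add_right[OF dM] op_mult_sum_right[OF dM] using op_mult_assoc[OF dM hM] by simp
  moreover have "op_mult (b0 + (\<Sum>k\<in>K. op_mult (h k) (b k))) d =
      op_mult b0 d + (\<Sum>k\<in>K. op_mult (op_mult (h k) d) (b k))"
    unfolding op_mult_add_left[OF dM] op_mult_sum_left[OF dM] using commutant_swap[OF hM d] bh by simp
  moreover have "op_mult d b0 = op_mult b0 d"
    using commutant_commute[OF d b0] .
  ultimately have "op_mult b0 d + (\<Sum>k\<in>K. op_mult (op_mult d (h k)) (b k)) =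
      op_mult b0 d + (\<Sum>k\<in>K. op_mult (op_mult (h k) d) (b k))"
    using rel by simp
  then have "(\<Sum>k\<in>K. op_mult (op_mult d (h k)) (b k)) - (\<Sum>k\<in>K. op_mult (op_mult (h k) d) (b k)) = 0"
    by (simp only: add_left_cancel diff_self)
  then show ?thesis
    using bM by (simp add: op_mult_diff_left sum_subtractf)
qed

text \<open>\<open>A \<otimes> A' \<rightarrow> Mat(\<int>\<^sup>D, p)\<close> is injective: a relation \<open>\<Sum>\<^sub>k a\<^sub>k b\<^sub>k = 0\<close> with linearly
  independent \<open>b\<^sub>k \<in> A'\<close> is trivial. If \<open>a\<^sub>j \<noteq> 0\<close>, simplicity of \<open>A\<close> produces a relation
  \<open>b\<^sub>j + \<Sum>\<^sub>k h\<^sub>k b\<^sub>k = 0\<close>; its commutators with \<open>A\<close> vanish by induction, so the \<open>h\<^sub>k\<close> are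
  central, hence scalars, contradicting independence.\<close>

lemma commutant_independent_coeffs_zero:
  fixes K :: "'i set"
  assumes "finite K"
  shows "\<forall>k\<in>K. a k \<in> A \<Longrightarrow> \<forall>k\<in>K. b k \<in> A' \<Longrightarrow> op_independent K b \<Longrightarrow>
    (\<Sum>k\<in>K. op_mult (a k) (b k)) = 0 \<Longrightarrow> \<forall>k\<in>K. a k = 0"
  using assms
proof (induction K arbitrary: a rule: finite_induct)
  case (insert j K)
  have aA: "\<forall>k\<in>K. a k \<in> A" "a j \<in> A" and bA': "\<forall>k\<in>K. b k \<in> A'" "b j \<in> A'"
    using insert.prems(1,2) by auto
  have indep: "op_independent K b"
    using op_independent_subset[OF insert.prems(3)] insert.hyps(1) by blast
  have rel: "op_mult (a j) (b j) + (\<Sum>k\<in>K. op_mult (a k) (b k)) = 0"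
    using insert.prems(4) unfolding sum.insert[OF insert.hyps] .
  show ?case
  proof (cases "a j = 0")
    case True
    have "(\<Sum>k\<in>K. op_mult (a k) (b k)) = 0"
      using rel unfolding True op_mult_zero_left add_0_left .
    then show ?thesis
      using insert.IH[OF aA(1) bA'(1) indep] True by blast
  next
    case False
    have "a j \<in> relation_coeffs K b (b j)"
      unfolding relation_coeffs_def using aA rel by blast
    moreover have "two_sided_ideal A (relation_coeffs K b (b j))"
      using relation_coeffs_ideal[OF bA'(2,1)] .
    ultimately have "relation_coeffs K b (b j) = A"
      using simple False unfolding simple_subalg_def by blast
    then obtain h where h: "\<forall>k\<in>K. h k \<in> A" "op_mult one (b j) + (\<Sum>k\<in>K. op_mult (h k) (b k)) = 0"
      using one_in_A unfolding relation_coeffs_def by blast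
    then have hrel: "b j + (\<Sum>k\<in>K. op_mult (h k) (b k)) = 0"
      using op_mult_one_left[OF commutant_Mat[OF bA'(2)]] by simp
    have h_central: "op_mult (h k) d = op_mult d (h k)" if d: "d \<in> A" and k: "k \<in> K" for d k
    proof -
      have "\<forall>k\<in>K. b k \<in> A' \<and> h k \<in> A"
        using bA'(1) h(1) by blast
      then have "(\<Sum>k\<in>K. op_mult (op_mult d (h k) - op_mult (h k) d) (b k)) = 0"
        by (rule relation_commutators[OF bA'(2) _ hrel d])
      moreover have "\<forall>k\<in>K. op_mult d (h k) - op_mult (h k) d \<in> A"
        using h(1) d A_diff A_mult by blast
      ultimately have "\<forall>k\<in>K. op_mult d (h k) - op_mult (h k) d = 0"
        using insert.IH[of "\<lambda>k. op_mult d (h k) - op_mult (h k) d", OF _ bA'(1) indep]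
        by blast
      then show ?thesis
        using k by simp
    qed
    have h_scalar: "\<forall>k\<in>K. \<exists>\<mu>. h k = op_scale \<mu> one"
    proof
      fix k assume "k \<in> K"
      then show "\<exists>\<mu>. h k = op_scale \<mu> one"
        using h(1) h_central[OF _ \<open>k \<in> K\<close>] by (intro central_scalar) simp_all
    qed
    have "\<forall>k\<in>insert j K. b k \<in> M"
      using bA' commutant_Mat by blast
    then show ?thesis
      using scalar_relation_not_independent[OF insert.hyps insert.prems(3) _ h_scalar hrel] by blast
  qed
qed simp

text \<open>A linear relation between \<open>1\<close> and the \<open>c\<^sub>k\<close> lets one eliminate a factor and induct;
  otherwise injectivity of \<open>A \<otimes> A' \<rightarrow> Mat(\<int>\<^sup>D, p)\<close>, applied to \<open>y 1 - \<Sum>\<^sub>k g\<^sub>k c\<^sub>k = 0\<close>,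
  gives \<open>y = 0\<close>.\<close>

lemma mem_subspace_of_prod_expansion:
  assumes V: "V \<subseteq> A" "0 \<in> V" "\<And>x y. x \<in> V \<Longrightarrow> y \<in> V \<Longrightarrow> x + y \<in> V"
    "\<And>c x. x \<in> V \<Longrightarrow> op_scale c x \<in> V"
  shows "finite K \<Longrightarrow> y \<in> A \<Longrightarrow> \<forall>k\<in>K. g k \<in> V \<Longrightarrow> \<forall>k\<in>K. c k \<in> A' \<Longrightarrow>
    y = (\<Sum>k\<in>K. op_mult (g k) (c k)) \<Longrightarrow> y \<in> V"
proof (induction K arbitrary: y g rule: finite_psubset_induct)
  case (psubset K)
  have gc: "g k \<in> A" "g k \<in> M" "c k \<in> M" if "k \<in> K" for k
    using psubset.prems(2,3) that V(1) A_Mat commutant_Mat by auto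
  have V_diff: "x - op_scale t z \<in> V" if "x \<in> V" "z \<in> V" for x z t
  proof -
    have "x - op_scale t z = x + op_scale (- t) z"
      by (simp add: op_scale_def fun_eq_iff)
    then show ?thesis
      using V(3)[OF that(1) V(4)[OF that(2)]] by metis
  qed
  show ?case
  proof (cases "\<exists>\<mu> \<nu>. op_scale \<mu> one + (\<Sum>k\<in>K. op_scale (\<nu> k) (c k)) = 0 \<and> (\<exists>j\<in>K. \<nu> j \<noteq> 0)")
    case True
    then obtain \<mu> \<nu> j where rel: "op_scale \<mu> one + (\<Sum>k\<in>K. op_scale (\<nu> k) (c k)) = 0"
      and j: "j \<in> K" "\<nu> j \<noteq> 0"
      by blast
    define y' where "y' = y + op_scale (\<mu> / \<nu> j) (g j)"
    have "y' = (\<Sum>k\<in>K - {j}. op_mult (g k - op_scale (\<nu> k / \<nu> j) (g j)) (c k))"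
      unfolding y'_def psubset.prems(4) using eliminate_dependent_factor[where \<nu> = \<nu>, OF psubset.hyps(1) j _ rel] gc
      by blast
    moreover have "y' \<in> A"
      unfolding y'_def using A_add[OF psubset.prems(1) A_scale[OF gc(1)[OF j(1)]]] .
    moreover have "\<forall>k\<in>K - {j}. g k - op_scale (\<nu> k / \<nu> j) (g j) \<in> V"
      using psubset.prems(2) j(1) V_diff by blast
    moreover have "K - {j} \<subset> K" "\<forall>k\<in>K - {j}. c k \<in> A'"
      using psubset.prems(3) j(1) by auto
    ultimately have "y' \<in> V"
      using psubset.IH[of "K - {j}" y' "\<lambda>k. g k - op_scale (\<nu> k / \<nu> j) (g j)"] by blast
    then have "y' - op_scale (\<mu> / \<nu> j) (g j) \<in> V"
      using V_diff psubset.prems(2) j(1) by blast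
    then show ?thesis
      unfolding y'_def by simp
  next
    case False
    let ?a = "\<lambda>q. case q of None \<Rightarrow> y | Some k \<Rightarrow> op_scale (-1) (g k)"
    let ?K = "insert None (Some ` K)"
    have "(\<Sum>q\<in>?K. op_mult (?a q) (case_option one c q)) = 0"
      using psubset.prems(4) gc op_mult_one_right[OF A_Mat[OF psubset.prems(1)]]
      by (simp add: sum_insert_None_image_Some[OF psubset.hyps(1)] op_scale_minus_one
          op_mult_minus_left sum_negf)
    moreover have "\<forall>q\<in>?K. ?a q \<in> A" "\<forall>q\<in>?K. case_option one c q \<in> A'"
      using psubset.prems(1,3) gc A_scale one_in_commutant by auto
    ultimately have "\<forall>q\<in>?K. ?a q = 0"
      using commutant_independent_coeffs_zero[of ?K ?a "case_option one c"] psubset.hyps(1)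
        op_independent_one_extension[OF psubset.hyps(1) False] by blast
    then have "y = 0"
      by (metis insertI1 option.case(1))
    then show ?thesis
      using V(2) by (simp only:)
  qed
qed

lemma prod_span_mult:
  assumes V: "V \<subseteq> A" "\<And>x y. x \<in> V \<Longrightarrow> y \<in> V \<Longrightarrow> op_mult x y \<in> V"
    and s: "s \<in> prod_span V" and t: "t \<in> prod_span V"
  shows "op_mult s t \<in> prod_span V"
proof (rule prod_span_additive_image[OF _ _ _ s])
  have tM: "t \<in> M"
    using prod_span_Mat[OF V(1) t] .
  show "op_mult (x + y) t = op_mult x t + op_mult y t" "op_mult 0 t = 0" for x y
    using op_mult_add_left[OF tM] by simp_all
  fix i c assume i: "i \<in> V" and c: "c \<in> A'"
  have "op_mult i (op_mult c t) \<in> prod_span V"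
    using i V(1) prod_span_mult_left_A[OF V(1) _ V(2)[OF i] prod_span_mult_left_commutant[OF V(1) c t]]
    by blast
  moreover have "op_mult (op_mult i c) t = op_mult i (op_mult c t)"
    using i c V(1) A_Mat commutant_Mat op_mult_assoc by blast
  ultimately show "op_mult (op_mult i c) t \<in> prod_span V"
    by simp
qed

lemma A_subset_if_units_in_prod_span:
  assumes V: "V \<subseteq> A" "one \<in> V" "0 \<in> V" "\<And>x y. x \<in> V \<Longrightarrow> y \<in> V \<Longrightarrow> x + y \<in> V"
    "\<And>c x. x \<in> V \<Longrightarrow> op_scale c x \<in> V" "\<And>x y. x \<in> V \<Longrightarrow> y \<in> V \<Longrightarrow> op_mult x y \<in> V"
    and units: "\<And>s \<alpha> \<beta>. s \<in> sites D \<Longrightarrow> mat_unit {s} \<alpha> \<beta> \<in> prod_span V"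
  shows "A \<subseteq> V"
proof
  fix y assume y: "y \<in> A"
  have one_span: "one \<in> prod_span V"
    using prod_span_base[OF V(2) one_in_commutant] op_mult_one_right[OF Mat_one] by simp
  have unit_span: "mat_unit U \<alpha> \<beta> \<in> prod_span V"
    if "finite U" "U \<subseteq> sites D" "\<beta> \<in> Cf" for U \<alpha> \<beta>
    using that
  proof (induction U rule: finite_induct)
    case (insert s U)
    then show ?case
      using mat_unit_insert[of s U \<beta> \<alpha>] prod_span_mult[OF V(1,6) units] by simp
  qed (simp add: mat_unit_empty one_span)
  obtain U where yU: "loc U y"
    using A_Mat[OF y] Mat_iff_local by blast
  have "(\<Sum>\<alpha>\<in>confs_on U. \<Sum>\<beta>\<in>confs_on U. op_scale (y \<alpha> \<beta>) (mat_unit U \<alpha> \<beta>)) \<in> prod_span V"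
    using local_finite[OF yU] local_subset_sites[OF yU]
    by (intro prod_span_sum prod_span_scale[OF V(1)] unit_span) (auto simp: fiber_def)
  then have "y \<in> prod_span V"
    using mat_unit_expansion[OF yU] by simp
  then obtain xs where xs: "set xs \<subseteq> V \<times> A'" "y = sum_list (map (case_prod op_mult) xs)"
    unfolding prod_span_def by blast
  then have "y = (\<Sum>k<length xs. op_mult (fst (xs ! k)) (snd (xs ! k)))"
    by (simp add: sum_list_sum_nth atLeast0LessThan case_prod_beta)
  moreover have "\<forall>k\<in>{..<length xs}. fst (xs ! k) \<in> V" "\<forall>k\<in>{..<length xs}. snd (xs ! k) \<in> A'"
    using xs(1) nth_mem by fastforce+
  ultimately show "y \<in> V"
    using mem_subspace_of_prod_expansion[OF V(1,3,4,5), of "{..<length xs}" y "\<lambda>k. fst (xs ! k)"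
        "\<lambda>k. snd (xs ! k)"] y
    by blast
qed

lemma locally_generated: "locally_generated D p A"
proof -
  obtain l where "l > 0" and l: "\<forall>x\<in>M. \<exists>(n::nat) a b. (\<forall>i<n. a i \<in> A \<and> b i \<in> A' \<and>
      Supp D p (a i) \<subseteq> thicken D (Supp D p x) l \<and> Supp D p (b i) \<subseteq> thicken D (Supp D p x) l) \<and>
      x = (\<Sum>i<n. op_mult (a i) (b i))"
    using invertible unfolding invertible_subalg_def by blast
  define G where "G = {a \<in> A. diam_le (Supp D p a) (2 * l)}"
  have "A \<subseteq> B" if B: "unital_star_subalg D p B" "G \<subseteq> B" for B
  proof (rule A_subset_if_units_in_prod_span[of "A \<inter> B", THEN subset_trans])
    have "op_scale 0 one \<in> B"
      using B(1) unfolding unital_star_subalg_def by blast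
    then show "0 \<in> A \<inter> B"
      using zero_in_A by simp
    fix s \<alpha> \<beta> assume s: "s \<in> sites D"
    let ?E = "mat_unit {s} \<alpha> \<beta>"
    obtain n :: nat and a b where ab: "\<forall>i<n. a i \<in> A \<and> b i \<in> A' \<and>
        Supp D p (a i) \<subseteq> thicken D (Supp D p ?E) l \<and> Supp D p (b i) \<subseteq> thicken D (Supp D p ?E) l"
      and E: "?E = (\<Sum>i<n. op_mult (a i) (b i))"
      using bspec[OF l Mat_mat_unit[of "{s}"]] s by blast
    have "thicken D (Supp D p ?E) l \<subseteq> thicken D {s} l"
      using Supp_subset local_mat_unit[of "{s}"] s thicken_mono by blast
    then have "diam_le (Supp D p (a i)) (2 * l)" if "i < n" for i
      using ab that diam_le_thicken_singleton[OF _ s] by blast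
    then have "a i \<in> A \<inter> B" if "i < n" for i
      using ab that B(2) unfolding G_def by blast
    then show "?E \<in> prod_span (A \<inter> B)"
      unfolding E using ab by (intro prod_span_sum prod_span_base) auto
  qed (use B(1) in \<open>auto simp: unital_star_subalg_def intro: one_in_A A_add A_scale A_mult\<close>)
  then have "A \<subseteq> generated_subalg D p G"
    unfolding generated_subalg_def by blast
  moreover have "generated_subalg D p G \<subseteq> A"
    unfolding generated_subalg_def G_def using unital_star_subalg by blast
  moreover have "G \<subseteq> A" "\<forall>g\<in>G. diam_le (Supp D p g) (2 * l)" "0 < 2 * l"
    using \<open>l > 0\<close> unfolding G_def by auto
  ultimately show ?thesis
    unfolding locally_generated_def by (intro exI[of _ "2 * l"] conjI exI[of _ G]) auto
qed

end

theorem proposition2p6: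
  fixes D :: nat and p :: "site \<Rightarrow> nat" and A :: "op set"
  assumes "\<forall>s \<in> sites D. p s > 0"
    and "invertible_subalg D p A"
  shows "central_subalg D p A \<and> simple_subalg A \<and> locally_generated D p A"
proof -
  interpret invertible_subalgebra D p A
    using assms by unfold_locales
  show ?thesis
    using central simple locally_generated by blast
qed

end
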